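(* In the setup described in the context, there exist polynomials $q_{kl}\in K[X]=K[X_{ij}\mid(i,j)\in N_0]$, for $1\le k\le v$ and $1\le l\le d$, depending only on the chosen ordered basis $B$ of $\mathbf P$, with the following property: for every $C\in\mathrm{GRASS}(\sigma)$ with coordinates $(c_{ij})_{(i,j)\in N_0}$, the point of $\mathbb P(\Lambda^a\mathbf P)$ corresponding (via Plücker) to $C$ is represented by $\mathbf c=C'_1\wedge\cdots\wedge C'_u\wedge C''_1\wedge\cdots\wedge C''_v\in\Lambda^a\mathbf P$, where $C'_i=b'_i-\sum_{1\le j\le d,\,(i,j)\in N_0}c_{ij}b_j$ for $1\le i\le u$ and $C''_k=b''_k-\sum_{l=1}^dq_{kl}(c_{ij})\,b_l$ for $1\le k\le v$. In particular, the coefficient of $\mathbf c$ on the basis vector $b'_1\wedge\cdots\wedge b'_u\wedge b''_1\wedge\cdots\wedge b''_v$ equals $1$.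
   Context: $K$ algebraically closed, $A=KQ/I$ basic finite-dimensional, $Q$ a finite quiver with vertices $e_1,\dots,e_n$, $J$ the Jacobson radical, $L+1$ the Loewy length; paths compose right to left. For $\mathbf d=(d_1,\dots,d_n)$, $d=\sum d_i$, $\mathbf P=\bigoplus_{r=1}^dAz_r$ is a projective cover of $\bigoplus_iS_i^{d_i}$ with top elements $z_r$ normed by vertices $e(r)$, $\widehat{\mathbf P}=\bigoplus_rKQz_r$, $a=\dim\mathbf P-d$; $\operatorname{Gr}(a,\mathbf P)\subseteq\mathbb P(\Lambda^a\mathbf P)$ via Plücker. A skeleton in $\widehat{\mathbf P}$ with radical layering $\mathbb S=(\mathbb S_0,\dots,\mathbb S_L)$, $\mathbb S_l=\bigoplus_iS_i^{m(l,i)}$, is a set $\sigma$ of paths $pz_r$ of length $\le L$ with exactly $m(l,i)$ paths of length $l$ ending in $e_i$, closed under initial subpaths. $\mathrm{GRASS}(\sigma)$ is the set of $A$-submodules $C\subseteq\mathbf P$ with $\underline{\dim}(\mathbf P/C)=\mathbf d$, radical layering of $\mathbf P/C$ equal to $\mathbb S$, such that the images of the paths of $\sigma$ form a basis of $\mathbf P/C$; assume $\mathrm{GRASS}(\sigma)\neq\varnothing$, so that $\sigma$ is identified with a linearly independent subset $\{b_1,\dots,b_d\}$ of $\mathbf P$. A path $b'$ in $\widehat{\mathbf P}$ of length $\le L$ is $\sigma$-critical if $b'\notin\sigma$ but every proper initial subpath of $b'$ lies in $\sigma$ (in particular $z_r\notin\sigma$ is $\sigma$-critical). For such $b'$, $\sigma(b')=\{b\in\sigma:\operatorname{length}(b)\ge\operatorname{length}(b'),\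 \operatorname{end}(b)=\operatorname{end}(b')\}$. Choose $\sigma$-critical paths $b'_1,\dots,b'_u$ whose images in $\mathbf P$ induce a basis of $(\sum_{b'\ \sigma\text{-critical}}Kb'+\sum_jKb_j)/\sum_jKb_j$, and paths $b''_1,\dots,b''_v$ in $\mathbf P$ such that $B=(b_1,\dots,b_d,b'_1,\dots,b'_u,b''_1,\dots,b''_v)=(w_1,\dots,w_{\dim\mathbf P})$ is an ordered basis of $\mathbf P$ (so $u+v=a$). Let $N_0=\{(i,j)\in\{1,\dots,u\}\times\{1,\dots,d\}: b_j\in\sigma(b'_i)\}$. Every $C\in\mathrm{GRASS}(\sigma)$ can be written uniquely as $C=\sum_{i=1}^uA\,(b'_i-\sum_{(i,j)\in N_0}c_{ij}b_j)$ with $c_{ij}\in K$, and $C\mapsto(c_{ij})$ is an isomorphism of $\mathrm{GRASS}(\sigma)$ onto a closed subvariety of $\mathbb A^{N_0}$; $(c_{ij})$ are called the coordinates of $C$. *)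

theory Defs
  imports "HOL-Computational_Algebra.Polynomial" "HOL-Library.Poly_Mapping"
          "Jordan_Normal_Form.Determinant"
begin

text \<open>A path is a pair (v, as): starting vertex v and the arrows in the order in which they are
  traversed (so the path is as!(n-1) ... as!0 in right-to-left notation). (v, []) is the
  trivial path e_v.\<close>

type_synonym ('v,'e) path = "'v \<times> 'e list"
type_synonym ('v,'e) ppath = "('v,'e) path \<times> nat"  \<comment> \<open>(p, r) stands for p z_r\<close>

fun valid_path :: "('e \<Rightarrow> 'v) \<Rightarrow> ('e \<Rightarrow> 'v) \<Rightarrow> 'v \<Rightarrow> 'e list \<Rightarrow> bool" where
  "valid_path s t v [] = True"
| "valid_path s t v (a # as) = (s a = v \<and> valid_path s t (t a) as)"

definition is_path :: "('e \<Rightarrow> 'v) \<Rightarrow> ('e \<Rightarrow> 'v) \<Rightarrow> ('v,'e) path \<Rightarrow> bool" where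
  "is_path s t p = valid_path s t (fst p) (snd p)"

definition path_end :: "('e \<Rightarrow> 'v) \<Rightarrow> ('v,'e) path \<Rightarrow> 'v" where
  "path_end t p = (if snd p = [] then fst p else t (last (snd p)))"

definition path_len :: "('v,'e) path \<Rightarrow> nat" where
  "path_len p = length (snd p)"

definition init_sub :: "nat \<Rightarrow> ('v,'e) path \<Rightarrow> ('v,'e) path" where
  "init_sub j p = (fst p, take j (snd p))"

definition delta :: "'a \<Rightarrow> 'a \<Rightarrow> 'k::zero_neq_one" where
  "delta p = (\<lambda>q. if q = p then 1 else 0)"

definition KQ :: "('e \<Rightarrow> 'v) \<Rightarrow> ('e \<Rightarrow> 'v) \<Rightarrow> (('v,'e) path \<Rightarrow> 'k::field) set" where
  "KQ s t = {f. finite {p. f p \<noteq> 0} \<and> (\<forall>p. f p \<noteq> 0 \<longrightarrow> is_path s t p)}"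

text \<open>Multiplication in KQ (paths compose right to left: q * r = "first r, then q").\<close>
definition kq_mult :: "('e \<Rightarrow> 'v) \<Rightarrow> ('e \<Rightarrow> 'v) \<Rightarrow> (('v,'e) path \<Rightarrow> 'k::field)
    \<Rightarrow> (('v,'e) path \<Rightarrow> 'k) \<Rightarrow> ('v,'e) path \<Rightarrow> 'k" where
  "kq_mult s t f g p = (if is_path s t p then
     (\<Sum>j\<in>{0..path_len p}. f (path_end t (init_sub j p), drop j (snd p)) * g (init_sub j p))
   else 0)"

text \<open>Admissible two-sided ideal I of KQ: R^m \<subseteq> I \<subseteq> R^2, R the arrow ideal.\<close>
definition admissible_ideal :: "('e \<Rightarrow> 'v) \<Rightarrow> ('e \<Rightarrow> 'v) \<Rightarrow> (('v,'e) path \<Rightarrow> 'k::field) set \<Rightarrow> bool" where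
  "admissible_ideal s t I \<longleftrightarrow>
     I \<subseteq> KQ s t \<and> (\<lambda>_. 0) \<in> I \<and>
     (\<forall>f\<in>I. \<forall>g\<in>I. (\<lambda>p. f p + g p) \<in> I) \<and>
     (\<forall>c. \<forall>f\<in>I. (\<lambda>p. c * f p) \<in> I) \<and>
     (\<forall>f\<in>KQ s t. \<forall>g\<in>I. kq_mult s t f g \<in> I \<and> kq_mult s t g f \<in> I) \<and>
     (\<exists>m\<ge>2. \<forall>p. is_path s t p \<and> path_len p \<ge> m \<longrightarrow> delta p \<in> I) \<and>
     (\<forall>g\<in>I. \<forall>p. path_len p < 2 \<longrightarrow> g p = 0)"

text \<open>Loewy length of A = KQ/I equals L+1 (J = image of the arrow ideal, I admissible):
  J^(L+1) = 0 and J^L \<noteq> 0.\<close>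
definition loewy_length_is :: "('e \<Rightarrow> 'v) \<Rightarrow> ('e \<Rightarrow> 'v) \<Rightarrow> (('v,'e) path \<Rightarrow> 'k::field) set \<Rightarrow> nat \<Rightarrow> bool" where
  "loewy_length_is s t I L1 \<longleftrightarrow>
     (\<forall>p. is_path s t p \<and> path_len p \<ge> L1 \<longrightarrow> delta p \<in> I) \<and>
     (\<exists>p. is_path s t p \<and> path_len p \<ge> L1 - 1 \<and> delta p \<notin> I)"

text \<open>P-hat = \<Oplus>_r KQ z_r, where z_r is normed by the vertex e r.\<close>
definition Phat :: "('e \<Rightarrow> 'v) \<Rightarrow> ('e \<Rightarrow> 'v) \<Rightarrow> (nat \<Rightarrow> 'v) \<Rightarrow> nat \<Rightarrow> (('v,'e) ppath \<Rightarrow> 'k::field) set" where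
  "Phat s t e D = {x. finite {q. x q \<noteq> 0} \<and>
      (\<forall>p r. x (p, r) \<noteq> 0 \<longrightarrow> is_path s t p \<and> fst p = e r \<and> r \<in> {1..D})}"

definition Ihat :: "('e \<Rightarrow> 'v) \<Rightarrow> ('e \<Rightarrow> 'v) \<Rightarrow> (('v,'e) path \<Rightarrow> 'k::field) set \<Rightarrow> (nat \<Rightarrow> 'v) \<Rightarrow> nat
    \<Rightarrow> (('v,'e) ppath \<Rightarrow> 'k) set" where
  "Ihat s t I e D = {x \<in> Phat s t e D. \<forall>r. (\<lambda>p. x (p, r)) \<in> I}"

definition act :: "('e \<Rightarrow> 'v) \<Rightarrow> ('e \<Rightarrow> 'v) \<Rightarrow> (('v,'e) path \<Rightarrow> 'k::field)
    \<Rightarrow> (('v,'e) ppath \<Rightarrow> 'k) \<Rightarrow> ('v,'e) ppath \<Rightarrow> 'k" where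
  "act s t f x q = (if is_path s t (fst q) then
     (\<Sum>j\<in>{0..path_len (fst q)}. f (path_end t (init_sub j (fst q)), drop j (snd (fst q)))
                                  * x (init_sub j (fst q), snd q))
   else 0)"

text \<open>P is modelled as a K-vector space 'p (scalar multiplication scale) together with a
  K-linear surjection \<pi> : P-hat \<rightarrow> P with kernel I-hat = \<Oplus>_r I z_r, i.e. P = P-hat / I-hat.\<close>
definition proj_model :: "('e \<Rightarrow> 'v) \<Rightarrow> ('e \<Rightarrow> 'v) \<Rightarrow> (('v,'e) path \<Rightarrow> 'k::field) set \<Rightarrow> (nat \<Rightarrow> 'v) \<Rightarrow> nat
    \<Rightarrow> ('k \<Rightarrow> 'p::ab_group_add \<Rightarrow> 'p) \<Rightarrow> ((('v,'e) ppath \<Rightarrow> 'k) \<Rightarrow> 'p) \<Rightarrow> bool" where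
  "proj_model s t I e D scale \<pi> \<longleftrightarrow>
     vector_space scale \<and>
     (\<forall>x\<in>Phat s t e D. \<forall>y\<in>Phat s t e D. \<pi> (\<lambda>q. x q + y q) = \<pi> x + \<pi> y) \<and>
     (\<forall>c. \<forall>x\<in>Phat s t e D. \<pi> (\<lambda>q. c * x q) = scale c (\<pi> x)) \<and>
     \<pi> ` Phat s t e D = UNIV \<and>
     (\<forall>x\<in>Phat s t e D. \<pi> x = 0 \<longleftrightarrow> x \<in> Ihat s t I e D)"

definition submod :: "('e \<Rightarrow> 'v) \<Rightarrow> ('e \<Rightarrow> 'v) \<Rightarrow> (nat \<Rightarrow> 'v) \<Rightarrow> nat
    \<Rightarrow> ('k::field \<Rightarrow> 'p::ab_group_add \<Rightarrow> 'p) \<Rightarrow> ((('v,'e) ppath \<Rightarrow> 'k) \<Rightarrow> 'p) \<Rightarrow> 'p set \<Rightarrow> bool" where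
  "submod s t e D scale \<pi> C \<longleftrightarrow> module.subspace scale C \<and>
     (\<forall>f\<in>KQ s t. \<forall>x\<in>Phat s t e D. \<pi> x \<in> C \<longrightarrow> \<pi> (act s t f x) \<in> C)"

definition gen_submod :: "('e \<Rightarrow> 'v) \<Rightarrow> ('e \<Rightarrow> 'v) \<Rightarrow> (nat \<Rightarrow> 'v) \<Rightarrow> nat
    \<Rightarrow> ('k::field \<Rightarrow> 'p::ab_group_add \<Rightarrow> 'p) \<Rightarrow> ((('v,'e) ppath \<Rightarrow> 'k) \<Rightarrow> 'p) \<Rightarrow> 'p set \<Rightarrow> 'p set" where
  "gen_submod s t e D scale \<pi> X = \<Inter>{M. submod s t e D scale \<pi> M \<and> X \<subseteq> M}"

definition vtx_part :: "('e \<Rightarrow> 'v) \<Rightarrow> ('e \<Rightarrow> 'v) \<Rightarrow> (nat \<Rightarrow> 'v) \<Rightarrow> nat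
    \<Rightarrow> ((('v,'e) ppath \<Rightarrow> 'k::field) \<Rightarrow> 'p) \<Rightarrow> 'v \<Rightarrow> 'p set \<Rightarrow> 'p set" where
  "vtx_part s t e D \<pi> i M = {\<pi> (act s t (delta (i, [])) x) | x. x \<in> Phat s t e D \<and> \<pi> x \<in> M}"

text \<open>J^l P, the image of the combinations of paths of length \<ge> l.\<close>
definition radP :: "('e \<Rightarrow> 'v) \<Rightarrow> ('e \<Rightarrow> 'v) \<Rightarrow> (nat \<Rightarrow> 'v) \<Rightarrow> nat
    \<Rightarrow> ((('v,'e) ppath \<Rightarrow> 'k::field) \<Rightarrow> 'p) \<Rightarrow> nat \<Rightarrow> 'p set" where
  "radP s t e D \<pi> l = {\<pi> x | x. x \<in> Phat s t e D \<and> (\<forall>p r. x (p, r) \<noteq> 0 \<longrightarrow> path_len p \<ge> l)}"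

definition set_plus :: "'p::ab_group_add set \<Rightarrow> 'p set \<Rightarrow> 'p set" where
  "set_plus X Y = {x + y | x y. x \<in> X \<and> y \<in> Y}"

definition pi_path :: "((('v,'e) ppath \<Rightarrow> 'k::field) \<Rightarrow> 'p) \<Rightarrow> ('v,'e) ppath \<Rightarrow> 'p" where
  "pi_path \<pi> q = \<pi> (delta q)"

definition basis_mod :: "('k::field \<Rightarrow> 'p::ab_group_add \<Rightarrow> 'p) \<Rightarrow> 'p set \<Rightarrow> ('a \<Rightarrow> 'p) \<Rightarrow> 'a set \<Rightarrow> bool" where
  "basis_mod scale C f X \<longleftrightarrow>
     (\<forall>lam. (\<Sum>x\<in>X. scale (lam x) (f x)) \<in> C \<longrightarrow> (\<forall>x\<in>X. lam x = 0)) \<and>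
     (\<forall>y. \<exists>lam. y - (\<Sum>x\<in>X. scale (lam x) (f x)) \<in> C)"

definition ppaths :: "('e \<Rightarrow> 'v) \<Rightarrow> ('e \<Rightarrow> 'v) \<Rightarrow> (nat \<Rightarrow> 'v) \<Rightarrow> nat \<Rightarrow> ('v,'e) ppath set" where
  "ppaths s t e D = {(p, r). is_path s t p \<and> fst p = e r \<and> r \<in> {1..D}}"

definition skeleton :: "('e \<Rightarrow> 'v) \<Rightarrow> ('e \<Rightarrow> 'v) \<Rightarrow> (nat \<Rightarrow> 'v) \<Rightarrow> nat \<Rightarrow> nat \<Rightarrow> ('v,'e) ppath set \<Rightarrow> bool" where
  "skeleton s t e D L \<sigma> \<longleftrightarrow>
     \<sigma> \<subseteq> {q \<in> ppaths s t e D. path_len (fst q) \<le> L} \<and>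
     (\<forall>(p, r)\<in>\<sigma>. \<forall>j \<le> path_len p. (init_sub j p, r) \<in> \<sigma>)"

definition layer_mult :: "('e \<Rightarrow> 'v) \<Rightarrow> ('v,'e) ppath set \<Rightarrow> nat \<Rightarrow> 'v \<Rightarrow> nat" where
  "layer_mult t \<sigma> l i = card {q \<in> \<sigma>. path_len (fst q) = l \<and> path_end t (fst q) = i}"

definition GRASS :: "('e \<Rightarrow> 'v) \<Rightarrow> ('e \<Rightarrow> 'v) \<Rightarrow> (nat \<Rightarrow> 'v) \<Rightarrow> nat \<Rightarrow> nat \<Rightarrow> ('v \<Rightarrow> nat)
    \<Rightarrow> ('k::field \<Rightarrow> 'p::ab_group_add \<Rightarrow> 'p) \<Rightarrow> ((('v,'e) ppath \<Rightarrow> 'k) \<Rightarrow> 'p)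
    \<Rightarrow> ('v,'e) ppath set \<Rightarrow> 'p set set" where
  "GRASS s t e D L d scale \<pi> \<sigma> = {C.
     submod s t e D scale \<pi> C \<and>
     (\<forall>i. vector_space.dim scale (vtx_part s t e D \<pi> i UNIV)
            = d i + vector_space.dim scale (vtx_part s t e D \<pi> i C)) \<and>
     (\<forall>l\<le>L. \<forall>i. vector_space.dim scale (vtx_part s t e D \<pi> i (set_plus (radP s t e D \<pi> l) C))
            = layer_mult t \<sigma> l i
              + vector_space.dim scale (vtx_part s t e D \<pi> i (set_plus (radP s t e D \<pi> (Suc l)) C))) \<and>
     basis_mod scale C (pi_path \<pi>) \<sigma>}"

definition critical :: "('e \<Rightarrow> 'v) \<Rightarrow> ('e \<Rightarrow> 'v) \<Rightarrow> (nat \<Rightarrow> 'v) \<Rightarrow> nat \<Rightarrow> nat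
    \<Rightarrow> ('v,'e) ppath set \<Rightarrow> ('v,'e) ppath \<Rightarrow> bool" where
  "critical s t e D L \<sigma> q \<longleftrightarrow> q \<in> ppaths s t e D \<and> path_len (fst q) \<le> L \<and> q \<notin> \<sigma> \<and>
     (\<forall>j < path_len (fst q). (init_sub j (fst q), snd q) \<in> \<sigma>)"

definition sigma_of :: "('e \<Rightarrow> 'v) \<Rightarrow> ('v,'e) ppath set \<Rightarrow> ('v,'e) ppath \<Rightarrow> ('v,'e) ppath set" where
  "sigma_of t \<sigma> q = {b \<in> \<sigma>. path_len (fst b) \<ge> path_len (fst q) \<and> path_end t (fst b) = path_end t (fst q)}"

definition N0 :: "('e \<Rightarrow> 'v) \<Rightarrow> ('v,'e) ppath set \<Rightarrow> (nat \<Rightarrow> ('v,'e) ppath) \<Rightarrow> nat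
    \<Rightarrow> (nat \<Rightarrow> ('v,'e) ppath) \<Rightarrow> nat \<Rightarrow> (nat \<times> nat) set" where
  "N0 t \<sigma> b D b' u = {(i, j). i \<in> {1..u} \<and> j \<in> {1..D} \<and> b j \<in> sigma_of t \<sigma> (b' i)}"

text \<open>The ordered basis B = (b_1..b_D, b'_1..b'_u, b''_1..b''_v), indices 1..D+u+v.\<close>
definition Bseq :: "(nat \<Rightarrow> 'a) \<Rightarrow> nat \<Rightarrow> (nat \<Rightarrow> 'a) \<Rightarrow> nat \<Rightarrow> (nat \<Rightarrow> 'a) \<Rightarrow> nat \<Rightarrow> 'a" where
  "Bseq b D b' u b'' m = (if m \<le> D then b m else if m \<le> D + u then b' (m - D) else b'' (m - D - u))"

definition bcoord :: "('k::field \<Rightarrow> 'p::ab_group_add \<Rightarrow> 'p) \<Rightarrow> (nat \<Rightarrow> 'p) \<Rightarrow> nat \<Rightarrow> 'p \<Rightarrow> nat \<Rightarrow> 'k" where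
  "bcoord scale w N x = (THE f. (\<forall>m. m \<notin> {1..N} \<longrightarrow> f m = 0) \<and> x = (\<Sum>m\<in>{1..N}. scale (f m) (w m)))"

text \<open>y_1 \<and> ... \<and> y_a \<in> \<Lambda>^a P, written in the basis w_{s_1} \<and> ... \<and> w_{s_a}
  (s_1 < ... < s_a, S = {s_1..s_a} \<subseteq> {1..N}); the coefficient is the a\<times>a minor.\<close>
definition wedge :: "('k::field \<Rightarrow> 'p::ab_group_add \<Rightarrow> 'p) \<Rightarrow> (nat \<Rightarrow> 'p) \<Rightarrow> nat \<Rightarrow> nat
    \<Rightarrow> (nat \<Rightarrow> 'p) \<Rightarrow> nat set \<Rightarrow> 'k" where
  "wedge scale w N a y S = (if S \<subseteq> {1..N} \<and> card S = a then
      det (mat a a (\<lambda>(k, j). bcoord scale w N (y (Suc k)) (sorted_list_of_set S ! j)))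
    else 0)"

text \<open>c represents the point of P(\<Lambda>^a P) corresponding to the a-dimensional subspace C.\<close>
definition pluecker_rep :: "('k::field \<Rightarrow> 'p::ab_group_add \<Rightarrow> 'p) \<Rightarrow> (nat \<Rightarrow> 'p) \<Rightarrow> nat \<Rightarrow> nat
    \<Rightarrow> 'p set \<Rightarrow> (nat set \<Rightarrow> 'k) \<Rightarrow> bool" where
  "pluecker_rep scale w N a C c \<longleftrightarrow>
     (\<exists>y lam. lam \<noteq> 0 \<and> inj_on y {1..a} \<and> module.independent scale (y ` {1..a}) \<and>
        module.span scale (y ` {1..a}) = C \<and> c = (\<lambda>S. lam * wedge scale w N a y S))"

type_synonym 'k mpoly = "((nat \<times> nat) \<Rightarrow>\<^sub>0 nat) \<Rightarrow>\<^sub>0 'k"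

definition mpoly_vars_in :: "'k::zero mpoly \<Rightarrow> (nat \<times> nat) set \<Rightarrow> bool" where
  "mpoly_vars_in p V \<longleftrightarrow> (\<forall>m\<in>Poly_Mapping.keys p. Poly_Mapping.keys m \<subseteq> V)"

definition mpoly_eval :: "'k::comm_semiring_1 mpoly \<Rightarrow> (nat \<times> nat \<Rightarrow> 'k) \<Rightarrow> 'k" where
  "mpoly_eval p c = (\<Sum>m\<in>Poly_Mapping.keys p.
      Poly_Mapping.lookup p m * (\<Prod>x\<in>Poly_Mapping.keys m. c x ^ Poly_Mapping.lookup m x))"

end

theory Submission
  imports Defs
begin

(*
  Let C be in GRASS(sigma) with coordinates (c_ij), i.e. C is generated by the elements
  C'_i = b'_i - sum_{(i,j) in N0} c_ij b_j.  The whole proof rests on one reduction statement: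
  for every path rho in P there are polynomial functions R_l in the variables X_ij,
  (i,j) in N0, such that  rho - sum_l R_l(c) b_l  lies in C for every such C.  It is proved
  by well-founded induction on paths:
   - paths of length > L vanish in P, and paths of sigma reduce trivially;
   - any other path factors as q p2 with q sigma-critical.  The critical path q is a linear
     combination of the b'_i and b_j; subtracting C'_i gives a polynomial reduction of q, and
     the radical layering of P/C forces it to use only the b_j in sigma(q).  Multiplying by
     p2 turns it into a reduction of rho modulo the paths b_j p2, which are longer than rho
     or share a longer initial subpath with sigma, so the induction hypothesis applies.
  Applied to the b''_k this yields the polynomials q_kl.  Finally, a family
  y_k = w_{D+k} - sum_{l <= D} h_kl w_l in C, with C meeting span(w_1..w_D) trivially, is a
  basis of C whose wedge has coefficient 1 on w_{D+1} /\ ... /\ w_{D+a}; this identifies the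
  Pluecker point of C.
*)

section \<open>Polynomial functions in the variables X_ij\<close>

definition monomial_val :: "((nat\<times>nat) \<Rightarrow>\<^sub>0 nat) \<Rightarrow> (nat\<times>nat \<Rightarrow> 'k::comm_semiring_1) \<Rightarrow> 'k" where
  "monomial_val m c = (\<Prod>x\<in>Poly_Mapping.keys m. c x ^ Poly_Mapping.lookup m x)"

text \<open>A function of the coordinates is polynomial in the variables V if it is a finite linear
  combination of monomials in V.  This is easier to build up than an explicit polynomial.\<close>
definition poly_fun :: "(nat\<times>nat) set \<Rightarrow> ((nat\<times>nat \<Rightarrow> 'k::comm_semiring_1) \<Rightarrow> 'k) \<Rightarrow> bool" where
  "poly_fun V f \<longleftrightarrow> (\<exists>F a. finite F \<and> (\<forall>m\<in>F. Poly_Mapping.keys m \<subseteq> V)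
                        \<and> (\<forall>c. f c = (\<Sum>m\<in>F. a m * monomial_val m c)))"

text \<open>Monomials multiply by adding exponent vectors; to see this, evaluate over a common
  finite set of variables.\<close>
lemma monomial_val_superset:
  assumes "finite K" "Poly_Mapping.keys m \<subseteq> K"
  shows "monomial_val m c = (\<Prod>x\<in>K. c x ^ Poly_Mapping.lookup m x)"
  unfolding monomial_val_def
  by (rule prod.mono_neutral_left) (use assms in \<open>auto simp: in_keys_iff\<close>)

lemma keys_add_nat: "Poly_Mapping.keys (m1 + m2 :: 'a \<Rightarrow>\<^sub>0 nat) = Poly_Mapping.keys m1 \<union> Poly_Mapping.keys m2"
  by (auto simp: in_keys_iff lookup_add)

lemma monomial_val_add: "monomial_val (m1 + m2) c = monomial_val m1 c * monomial_val m2 c"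
proof -
  let ?K = "Poly_Mapping.keys m1 \<union> Poly_Mapping.keys m2"
  have "monomial_val (m1 + m2) c = (\<Prod>x\<in>?K. c x ^ Poly_Mapping.lookup (m1+m2) x)"
    by (rule monomial_val_superset) (auto simp: keys_add_nat)
  also have "\<dots> = (\<Prod>x\<in>?K. c x ^ Poly_Mapping.lookup m1 x) * (\<Prod>x\<in>?K. c x ^ Poly_Mapping.lookup m2 x)"
    by (simp add: lookup_add power_add prod.distrib)
  also have "\<dots> = monomial_val m1 c * monomial_val m2 c"
    by (subst (1 2) monomial_val_superset[of ?K]) auto
  finally show ?thesis .
qed

lemma poly_fun_mpoly:
  assumes "poly_fun V f"
  shows "\<exists>p. mpoly_vars_in p V \<and> (\<forall>c. mpoly_eval p c = f c)"
proof -
  obtain F a where F: "finite F" "\<forall>m\<in>F. Poly_Mapping.keys m \<subseteq> V"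
      "\<forall>c. f c = (\<Sum>m\<in>F. a m * monomial_val m c)"
    using assms unfolding poly_fun_def by blast
  define p where "p = (\<Sum>m\<in>F. Poly_Mapping.single m (a m))"
  have lookup_p: "Poly_Mapping.lookup p m' = (if m' \<in> F then a m' else 0)" for m'
    unfolding p_def lookup_sum lookup_single using F(1) by (simp add: when_def sum.delta)
  have keys_p: "Poly_Mapping.keys p \<subseteq> F"
    using lookup_p by (auto simp: in_keys_iff split: if_splits)
  have "mpoly_eval p c = f c" for c
  proof -
    have "mpoly_eval p c = (\<Sum>m\<in>Poly_Mapping.keys p. Poly_Mapping.lookup p m * monomial_val m c)"
      unfolding mpoly_eval_def monomial_val_def ..
    also have "\<dots> = (\<Sum>m\<in>F. Poly_Mapping.lookup p m * monomial_val m c)"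
      by (rule sum.mono_neutral_left) (use keys_p F(1) in \<open>auto simp: in_keys_iff\<close>)
    also have "\<dots> = f c" using F(3) lookup_p by simp
    finally show ?thesis .
  qed
  moreover have "mpoly_vars_in p V" using keys_p F(2) unfolding mpoly_vars_in_def by blast
  ultimately show ?thesis by blast
qed

lemma poly_fun_const: "poly_fun V (\<lambda>c. k)"
  unfolding poly_fun_def
  by (rule exI[of _ "{0}"], rule exI[of _ "\<lambda>_. k"]) (simp add: monomial_val_def)

lemma poly_fun_var: "x \<in> V \<Longrightarrow> poly_fun V (\<lambda>c. c x)"
  unfolding poly_fun_def
  by (rule exI[of _ "{Poly_Mapping.single x 1}"], rule exI[of _ "\<lambda>_. 1"]) (simp add: monomial_val_def)

lemma poly_fun_add:
  assumes "poly_fun V f" "poly_fun V g" shows "poly_fun V (\<lambda>c. f c + g c)"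
proof -
  obtain F a where F: "finite F" "\<forall>m\<in>F. Poly_Mapping.keys m \<subseteq> V"
      "\<forall>c. f c = (\<Sum>m\<in>F. a m * monomial_val m c)"
    using assms(1) unfolding poly_fun_def by blast
  obtain G b where G: "finite G" "\<forall>m\<in>G. Poly_Mapping.keys m \<subseteq> V"
      "\<forall>c. g c = (\<Sum>m\<in>G. b m * monomial_val m c)"
    using assms(2) unfolding poly_fun_def by blast
  define a' where "a' m = (if m \<in> F then a m else 0) + (if m \<in> G then b m else 0)" for m
  have "f c + g c = (\<Sum>m\<in>F\<union>G. a' m * monomial_val m c)" for c
  proof -
    have "(\<Sum>m\<in>F\<union>G. (if m \<in> F then a m else 0) * monomial_val m c) = (\<Sum>m\<in>F. a m * monomial_val m c)"
      by (rule sum.mono_neutral_cong_right) (use F G in auto)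
    moreover have "(\<Sum>m\<in>F\<union>G. (if m \<in> G then b m else 0) * monomial_val m c) = (\<Sum>m\<in>G. b m * monomial_val m c)"
      by (rule sum.mono_neutral_cong_right) (use F G in auto)
    ultimately show ?thesis unfolding a'_def distrib_right sum.distrib using F G by simp
  qed
  then show ?thesis unfolding poly_fun_def using F G
    by (intro exI[of _ "F \<union> G"] exI[of _ a']) auto
qed

lemma poly_fun_mult:
  assumes "poly_fun V f" "poly_fun V g" shows "poly_fun V (\<lambda>c. f c * g c)"
proof -
  obtain F a where F: "finite F" "\<forall>m\<in>F. Poly_Mapping.keys m \<subseteq> V"
      "\<forall>c. f c = (\<Sum>m\<in>F. a m * monomial_val m c)"
    using assms(1) unfolding poly_fun_def by blast
  obtain G b where G: "finite G" "\<forall>m\<in>G. Poly_Mapping.keys m \<subseteq> V"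
      "\<forall>c. g c = (\<Sum>m\<in>G. b m * monomial_val m c)"
    using assms(2) unfolding poly_fun_def by blast
  let ?h = "\<lambda>(m1, m2). m1 + m2"
  define a' where "a' m = (\<Sum>pq\<in>{pq\<in>F\<times>G. ?h pq = m}. a (fst pq) * b (snd pq))" for m
  have "f c * g c = (\<Sum>m\<in>?h ` (F\<times>G). a' m * monomial_val m c)" for c
  proof -
    have "f c * g c = (\<Sum>m1\<in>F. \<Sum>m2\<in>G. (a m1 * monomial_val m1 c) * (b m2 * monomial_val m2 c))"
      using F G by (simp add: sum_product)
    also have "\<dots> = (\<Sum>pq\<in>F\<times>G. a (fst pq) * b (snd pq) * monomial_val (?h pq) c)"
      by (simp add: sum.cartesian_product monomial_val_add case_prod_beta mult_ac)
    also have "\<dots> = (\<Sum>m\<in>?h ` (F\<times>G). \<Sum>pq\<in>{pq\<in>F\<times>G. ?h pq = m}. a (fst pq) * b (snd pq) * monomial_val (?h pq) c)"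
      by (rule sum.image_gen) (use F G in auto)
    also have "\<dots> = (\<Sum>m\<in>?h ` (F\<times>G). a' m * monomial_val m c)"
      unfolding a'_def sum_distrib_right by (rule sum.cong) auto
    finally show ?thesis .
  qed
  moreover have "\<forall>m\<in>?h ` (F\<times>G). Poly_Mapping.keys m \<subseteq> V"
    using F G by (auto simp: keys_add_nat)
  ultimately show ?thesis unfolding poly_fun_def using F G
    by (intro exI[of _ "?h ` (F\<times>G)"] exI[of _ a']) auto
qed

lemma poly_fun_sum:
  assumes "finite A" "\<And>i. i \<in> A \<Longrightarrow> poly_fun V (f i)"
  shows "poly_fun V (\<lambda>c. \<Sum>i\<in>A. f i c)"
  using assms
proof (induction A rule: finite_induct)
  case empty then show ?case using poly_fun_const[of V 0] by simp
next
  case (insert x F) then show ?case using poly_fun_add[of V "f x" "\<lambda>c. \<Sum>i\<in>F. f i c"] by simp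
qed

lemma span_image_repr:
  assumes vsp: "vector_space scale" and "finite A" "y \<in> module.span scale (f ` A)"
  shows "\<exists>g. y = (\<Sum>a\<in>A. scale (g a) (f a))"
proof -
  interpret V: vector_space scale by (rule vsp)
  show ?thesis using assms(3)
  proof (induction rule: V.span_induct_alt)
    case base
    show ?case by (rule exI[of _ "\<lambda>_. 0"]) simp
  next
    case (step c x y)
    then obtain a0 where a0: "a0 \<in> A" "x = f a0" by blast
    obtain g where g: "y = (\<Sum>a\<in>A. scale (g a) (f a))" using step by blast
    have "(\<Sum>a\<in>A. scale ((g(a0 := g a0 + c)) a) (f a))
        = (\<Sum>a\<in>A. scale (g a) (f a) + (if a = a0 then scale c (f a) else 0))"
      by (rule sum.cong) (auto simp: V.scale_left_distrib)
    also have "\<dots> = y + scale c x" using assms(2) a0 g by (simp add: sum.distrib)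
    finally show ?case by (intro exI[of _ "g(a0 := g a0 + c)"]) (simp add: add.commute)
  qed
qed

lemma span_image_repr2:
  assumes vsp: "vector_space scale" and "finite A" "finite B"
    and y: "y \<in> module.span scale (f ` A \<union> g ` B)"
  shows "\<exists>\<alpha> \<beta>. y = (\<Sum>a\<in>A. scale (\<alpha> a) (f a)) + (\<Sum>b\<in>B. scale (\<beta> b) (g b))"
proof -
  interpret V: vector_space scale by (rule vsp)
  obtain y1 y2 where "y = y1 + y2" "y1 \<in> V.span (f ` A)" "y2 \<in> V.span (g ` B)"
    using y unfolding V.span_Un by blast
  then show ?thesis using span_image_repr[OF vsp] assms(2,3) by metis
qed

lemma sum_indicator:
  assumes vsp: "vector_space scale" and "finite A" "x \<in> A"
  shows "(\<Sum>z\<in>A. scale (if z = x then 1 else 0) (f z)) = f x"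
proof -
  interpret V: vector_space scale by (rule vsp)
  have "(\<Sum>z\<in>A. scale (if z = x then 1 else 0) (f z)) = (\<Sum>z\<in>A. if z = x then f z else 0)"
    by (rule sum.cong) auto
  also have "\<dots> = f x" using assms by (simp add: sum.delta')
  finally show ?thesis .
qed

lemma scale_double_sum:
  assumes vsp: "vector_space scale" and "finite A" "finite B"
  shows "(\<Sum>l\<in>B. scale (\<Sum>j\<in>A. g j l) (v l)) = (\<Sum>j\<in>A. \<Sum>l\<in>B. scale (g j l) (v l))"
proof -
  interpret V: vector_space scale by (rule vsp)
  show ?thesis by (simp add: V.scale_sum_left sum.swap[of _ A])
qed

lemma basis_mod_coeffs_zero:
  "basis_mod scale C f X \<Longrightarrow> (\<Sum>x\<in>X. scale (lam x) (f x)) \<in> C \<Longrightarrow> \<forall>x\<in>X. lam x = 0"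
  unfolding basis_mod_def by (erule conjE) (erule allE, erule mp)

lemma basis_mod_inj:
  assumes vsp: "vector_space scale" and bm: "basis_mod scale C f X"
    and subC: "module.subspace scale C" and X: "finite X"
  shows "inj_on f X" "\<And>x. x \<in> X \<Longrightarrow> f x \<notin> C"
proof -
  interpret V: vector_space scale by (rule vsp)
  note bmi = basis_mod_coeffs_zero[OF bm]
  show "f x \<notin> C" if x: "x \<in> X" for x
  proof
    assume "f x \<in> C"
    then have "(\<Sum>z\<in>X. scale (if z = x then 1 else 0) (f z)) \<in> C"
      using sum_indicator[OF vsp X x, of f] by simp
    then have "\<forall>z\<in>X. (if z = x then 1 else 0) = (0::'a)" by (rule bmi)
    then show False using x by force
  qed
  show "inj_on f X"
  proof (rule inj_onI, rule ccontr)
    fix x y assume xy: "x \<in> X" "y \<in> X" "f x = f y" "x \<noteq> y"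
    let ?lam = "\<lambda>z. (if z = x then 1 else 0) - (if z = y then 1 else (0::'a))"
    have "(\<Sum>z\<in>X. scale (?lam z) (f z))
        = (\<Sum>z\<in>X. scale (if z = x then 1 else 0) (f z)) - (\<Sum>z\<in>X. scale (if z = y then 1 else 0) (f z))"
      by (simp add: V.scale_left_diff_distrib sum_subtractf)
    also have "\<dots> = 0" using sum_indicator[OF vsp X, of _ f] xy by simp
    finally have "\<forall>z\<in>X. ?lam z = 0" using bmi[of ?lam] V.subspace_0[OF subC] by simp
    then have "?lam x = 0" using xy(1) by blast
    then show False using xy(4) by simp
  qed
qed

lemma basis_mod_independent_union:
  assumes vsp: "vector_space scale" and bm: "basis_mod scale C f X"
    and subC: "module.subspace scale C" and X: "finite X" "T \<subseteq> X"
    and \<beta>: "\<beta> \<subseteq> C" "finite \<beta>" "module.independent scale \<beta>"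
  shows "module.independent scale (\<beta> \<union> f ` T)"
proof
  interpret V: vector_space scale by (rule vsp)
  have injT: "inj_on f T" using basis_mod_inj(1)[OF vsp bm subC X(1)] X(2) by (rule inj_on_subset)
  have disj: "\<beta> \<inter> f ` T = {}" using \<beta>(1) basis_mod_inj(2)[OF vsp bm subC X(1)] X(2) by blast
  have finT: "finite T" using X finite_subset by blast
  assume "V.dependent (\<beta> \<union> f ` T)"
  moreover have "finite (\<beta> \<union> f ` T)" using \<beta>(2) finT by simp
  ultimately obtain u where u: "\<exists>v\<in>\<beta> \<union> f ` T. u v \<noteq> 0" "(\<Sum>v\<in>\<beta> \<union> f ` T. scale (u v) v) = 0"
    by (subst (asm) V.dependent_finite) blast+
  have "(\<Sum>v\<in>\<beta> \<union> f ` T. scale (u v) v) = (\<Sum>v\<in>\<beta>. scale (u v) v) + (\<Sum>x\<in>T. scale (u (f x)) (f x))"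
    using \<beta>(2) finT disj sum.reindex[OF injT, of "\<lambda>v. scale (u v) v"] by (simp add: sum.union_disjoint)
  then have split: "(\<Sum>v\<in>\<beta>. scale (u v) v) + (\<Sum>x\<in>T. scale (u (f x)) (f x)) = 0" using u(2) by simp
  define lam where "lam x = (if x \<in> T then u (f x) else 0)" for x
  have "(\<Sum>x\<in>X. scale (lam x) (f x)) = (\<Sum>x\<in>T. scale (u (f x)) (f x))"
    unfolding lam_def by (rule sum.mono_neutral_cong_right) (use X in simp_all)
  also have "\<dots> = - (\<Sum>v\<in>\<beta>. scale (u v) v)" using split by (simp add: eq_neg_iff_add_eq_0 add.commute)
  also have "\<dots> \<in> C" using \<beta>(1)
    by (intro V.subspace_neg[OF subC] V.subspace_sum[OF subC] V.subspace_scale[OF subC]) auto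
  finally have lam0: "\<forall>x\<in>X. lam x = 0" by (rule basis_mod_coeffs_zero[OF bm])
  have uT: "\<forall>x\<in>T. u (f x) = 0"
  proof
    fix x assume x: "x \<in> T"
    then have "lam x = 0" using lam0 subsetD[OF X(2) x] by blast
    then show "u (f x) = 0" using x unfolding lam_def by simp
  qed
  then have "(\<Sum>v\<in>\<beta>. scale (u v) v) = 0" using split by simp
  then have "\<forall>v\<in>\<beta>. u v = 0" using V.independentD[OF \<beta>(3) \<beta>(2) order_refl] by blast
  then show False using u(1) uT by blast
qed

text \<open>Concatenation of paths: b followed by p2 (the path p2 b in right-to-left notation).\<close>
definition cat :: "('v,'e) path \<Rightarrow> ('v,'e) path \<Rightarrow> ('v,'e) path" where
  "cat b p2 = (fst b, snd b @ snd p2)"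

lemma valid_path_append:
  "valid_path s t v (xs @ ys) \<longleftrightarrow>
     valid_path s t v xs \<and> valid_path s t (if xs = [] then v else t (last xs)) ys"
  by (induction xs arbitrary: v) auto

lemma is_path_cat:
  assumes "is_path s t b" "is_path s t p2" "path_end t b = fst p2"
  shows "is_path s t (cat b p2)"
  using assms unfolding is_path_def cat_def path_end_def
  by (auto simp: valid_path_append split: if_splits)

lemma is_path_init_sub: "is_path s t p \<Longrightarrow> is_path s t (init_sub j p)"
  unfolding is_path_def init_sub_def
  using valid_path_append[of s t "fst p" "take j (snd p)" "drop j (snd p)"] by simp

lemma is_path_drop:
  "is_path s t p \<Longrightarrow> is_path s t (path_end t (init_sub j p), drop j (snd p))"
  unfolding is_path_def init_sub_def path_end_def
  using valid_path_append[of s t "fst p" "take j (snd p)" "drop j (snd p)"] by (auto split: if_splits)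

lemma cat_init_sub_drop: "cat (init_sub j p) (path_end t (init_sub j p), drop j (snd p)) = p"
  unfolding cat_def init_sub_def by simp

lemma delta_KQ: "is_path s t p \<Longrightarrow> (delta p :: _ \<Rightarrow> 'k::field) \<in> KQ s t"
  unfolding KQ_def delta_def by auto

lemma delta_Phat: "q \<in> ppaths s t e D \<Longrightarrow> (delta q :: _ \<Rightarrow> 'k::field) \<in> Phat s t e D"
  unfolding Phat_def ppaths_def delta_def by auto

lemma split_at_iff:
  assumes "j \<le> path_len p"
  shows "((path_end t (init_sub j p), drop j (snd p)) = p2 \<and> init_sub j p = b)
     \<longleftrightarrow> (j = length (snd b) \<and> p = cat b p2 \<and> path_end t b = fst p2)"
proof
  assume split: "(path_end t (init_sub j p), drop j (snd p)) = p2 \<and> init_sub j p = b"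
  then have b: "fst b = fst p" "snd b = take j (snd p)" and p2: "snd p2 = drop j (snd p)"
    unfolding init_sub_def by auto
  have "j = length (snd b)" using assms unfolding b path_len_def by simp
  moreover have "p = cat b p2" unfolding cat_def b p2 by simp
  moreover have "path_end t b = fst p2" using split by auto
  ultimately show "j = length (snd b) \<and> p = cat b p2 \<and> path_end t b = fst p2" by blast
next
  assume "j = length (snd b) \<and> p = cat b p2 \<and> path_end t b = fst p2"
  then show "(path_end t (init_sub j p), drop j (snd p)) = p2 \<and> init_sub j p = b"
    unfolding init_sub_def cat_def by auto
qed

lemma act_delta_cat:
  fixes s t :: "'e \<Rightarrow> 'v" and b p2 :: "('v,'e) path" and r :: nat
  assumes "is_path s t b" "is_path s t p2" "path_end t b = fst p2"
  shows "act s t (delta p2) (delta (b, r) :: _ \<Rightarrow> 'k::field) = delta (cat b p2, r)"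
proof (rule ext, clarify)
  fix p :: "('v,'e) path" and r' :: nat
  let ?hit = "p = cat b p2 \<and> r' = r"
  show "act s t (delta p2) (delta (b, r)) (p, r') = (delta (cat b p2, r) (p, r') :: 'k)"
  proof (cases "is_path s t p")
    case False
    then show ?thesis using is_path_cat[OF assms] by (auto simp: act_def delta_def)
  next
    case True
    have summand: "delta p2 (path_end t (init_sub j p), drop j (snd p)) * delta (b, r) (init_sub j p, r')
        = (if j = length (snd b) \<and> ?hit then 1 else (0::'k))" if j: "j \<in> {0..path_len p}" for j
    proof -
      have iff: "((path_end t (init_sub j p), drop j (snd p)) = p2 \<and> (init_sub j p, r') = (b, r))
          \<longleftrightarrow> j = length (snd b) \<and> ?hit"
        using split_at_iff[of j p t p2 b] j assms(3) unfolding prod.inject by auto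
      have "(delta p2 X * delta (b, r) Y :: 'k) = (if X = p2 \<and> Y = (b, r) then 1 else 0)" for X Y
        by (simp add: delta_def)
      then show ?thesis by (simp only: iff)
    qed
    have "act s t (delta p2) (delta (b, r)) (p, r')
        = (\<Sum>j\<in>{0..path_len p}. if j = length (snd b) \<and> ?hit then 1 else (0::'k))"
      unfolding act_def using True summand by simp
    also have "\<dots> = (if ?hit then 1 else 0)"
    proof (cases ?hit)
      case True
      then have "length (snd b) \<in> {0..path_len p}" unfolding cat_def path_len_def by simp
      then show ?thesis using True by (simp add: sum.delta)
    qed (auto intro!: sum.neutral)
    also have "\<dots> = delta (cat b p2, r) (p, r')" by (simp add: delta_def)
    finally show ?thesis by simp
  qed
qed

definition Eop :: "('e \<Rightarrow> 'v) \<Rightarrow> ('e \<Rightarrow> 'v) \<Rightarrow> 'v \<Rightarrow> (('v,'e) ppath \<Rightarrow> 'k::field) \<Rightarrow> ('v,'e) ppath \<Rightarrow> 'k" where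
  "Eop s t i x = (\<lambda>(p, r). if is_path s t p \<and> path_end t p = i then x (p, r) else 0)"

lemma act_idem: "act s t (delta (i, [])) (x :: _ \<Rightarrow> 'k::field) = Eop s t i x"
  unfolding Eop_def
proof (rule ext, clarify)
  fix p r
  have summand: "delta (i, []) (path_end t (init_sub j p), drop j (snd p)) * x (init_sub j p, r)
     = (if j = path_len p \<and> path_end t p = i then x (p, r) else 0)" if "j \<in> {0..path_len p}" for j
  proof (cases "j = path_len p")
    case True
    then have "init_sub j p = p" unfolding init_sub_def path_len_def by simp
    then show ?thesis using True by (simp add: delta_def path_len_def)
  next
    case False
    then have "drop j (snd p) \<noteq> []" using that unfolding path_len_def by auto
    then show ?thesis using False by (simp add: delta_def)
  qed
  have "(\<Sum>j\<in>{0..path_len p}. delta (i, []) (path_end t (init_sub j p), drop j (snd p)) * x (init_sub j p, r))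
      = (\<Sum>j\<in>{0..path_len p}. if j = path_len p \<and> path_end t p = i then x (p, r) else 0)"
    by (rule sum.cong[OF refl summand])
  also have "\<dots> = (if path_end t p = i then x (p, r) else 0)"
    by (cases "path_end t p = i") (simp_all add: sum.delta')
  finally show "act s t (delta (i, [])) x (p, r) = (if is_path s t p \<and> path_end t p = i then x (p, r) else 0)"
    unfolding act_def by simp
qed

lemma act_lin:
  fixes x :: "('v,'e) ppath \<Rightarrow> 'k::field"
  assumes "finite J"
  shows "act s t f (\<lambda>q. x q - (\<Sum>j\<in>J. a j * y j q))
       = (\<lambda>q. act s t f x q - (\<Sum>j\<in>J. a j * act s t f (y j) q))"
proof (rule ext)
  fix q :: "('v,'e) ppath"
  let ?F = "\<lambda>k. f (path_end t (init_sub k (fst q)), drop k (snd (fst q)))"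
  let ?Q = "\<lambda>k. (init_sub k (fst q), snd q)"
  have "(\<Sum>k\<in>{0..path_len (fst q)}. ?F k * (x (?Q k) - (\<Sum>j\<in>J. a j * y j (?Q k))))
     = (\<Sum>k\<in>{0..path_len (fst q)}. ?F k * x (?Q k))
       - (\<Sum>j\<in>J. a j * (\<Sum>k\<in>{0..path_len (fst q)}. ?F k * y j (?Q k)))"
    by (simp add: right_diff_distrib sum_subtractf sum_distrib_left mult.left_commute)
      (subst sum.swap, simp add: sum_distrib_left)
  then show "act s t f (\<lambda>q. x q - (\<Sum>j\<in>J. a j * y j q)) q
       = act s t f x q - (\<Sum>j\<in>J. a j * act s t f (y j) q)"
    unfolding act_def by simp
qed

lemma Phat_add: "x \<in> Phat s t e D \<Longrightarrow> y \<in> Phat s t e D \<Longrightarrow> (\<lambda>q. x q + y q) \<in> Phat s t e D"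
proof -
  assume a: "x \<in> Phat s t e D" "y \<in> Phat s t e D"
  have "{q. x q + y q \<noteq> 0} \<subseteq> {q. x q \<noteq> 0} \<union> {q. y q \<noteq> 0}" by auto
  then have fin: "finite {q. x q + y q \<noteq> 0}" using a unfolding Phat_def by (auto intro: finite_subset)
  have h: "\<forall>p r. x (p,r) + y (p,r) \<noteq> 0 \<longrightarrow> x (p,r) \<noteq> 0 \<or> y (p,r) \<noteq> 0" by auto
  show ?thesis using a fin h unfolding Phat_def by (simp only: mem_Collect_eq) blast
qed

lemma Phat_scale: "x \<in> Phat s t e D \<Longrightarrow> (\<lambda>q. c * x q) \<in> Phat s t e D"
proof -
  assume a: "x \<in> Phat s t e D"
  have "{q. c * x q \<noteq> 0} \<subseteq> {q. x q \<noteq> 0}" by auto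
  then have fin: "finite {q. c * x q \<noteq> 0}" using a unfolding Phat_def by (auto intro: finite_subset)
  have h: "\<forall>p r. c * x (p,r) \<noteq> 0 \<longrightarrow> x (p,r) \<noteq> 0" by auto
  show ?thesis using a fin h unfolding Phat_def by (simp only: mem_Collect_eq) blast
qed

lemma Phat_zero: "(\<lambda>q. 0) \<in> Phat s t e D"
  unfolding Phat_def by auto

lemma vtx_Eop: "vtx_part s t e D \<pi> i M = {\<pi> (Eop s t i x) | x. x \<in> Phat s t e D \<and> \<pi> x \<in> M}"
  unfolding vtx_part_def act_idem ..

lemma Eop_Phat: "x \<in> Phat s t e D \<Longrightarrow> Eop s t i x \<in> Phat s t e D"
proof -
  assume x: "x \<in> Phat s t e D"
  have "{q. Eop s t i x q \<noteq> 0} \<subseteq> {q. x q \<noteq> 0}" unfolding Eop_def by (auto split: if_splits)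
  then have fin: "finite {q. Eop s t i x q \<noteq> 0}" using x unfolding Phat_def by (auto intro: finite_subset)
  have h: "\<forall>p r. Eop s t i x (p, r) \<noteq> 0 \<longrightarrow> x (p, r) \<noteq> 0" unfolding Eop_def by (auto split: if_splits)
  show ?thesis using x fin h unfolding Phat_def by (simp only: mem_Collect_eq) blast
qed

lemma Eop_add: "Eop s t i (\<lambda>q. x q + y q) = (\<lambda>q. Eop s t i x q + Eop s t i y q)"
  unfolding Eop_def by auto

lemma Eop_scale: "Eop s t i (\<lambda>q. c * x q) = (\<lambda>q. c * Eop s t i x q)"
  unfolding Eop_def by auto

lemma Eop_zero: "Eop s t i (\<lambda>q. 0) = (\<lambda>q. 0)"
  unfolding Eop_def by auto

lemma Eop_delta: "q \<in> ppaths s t e D \<Longrightarrow> path_end t (fst q) = i \<Longrightarrow> Eop s t i (delta q) = delta q"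
  unfolding Eop_def ppaths_def delta_def by auto

context
  fixes s t :: "'e \<Rightarrow> 'v" and I :: "(('v,'e) path \<Rightarrow> 'k::field) set" and e :: "nat \<Rightarrow> 'v" and D :: nat
    and scale :: "'k \<Rightarrow> 'p::ab_group_add \<Rightarrow> 'p" and \<pi> :: "(('v,'e) ppath \<Rightarrow> 'k) \<Rightarrow> 'p"
  assumes P: "proj_model s t I e D scale \<pi>"
begin

lemma P_vector_space: "vector_space scale" using P unfolding proj_model_def by blast

lemma pi_add: "x \<in> Phat s t e D \<Longrightarrow> y \<in> Phat s t e D \<Longrightarrow> \<pi> (\<lambda>q. x q + y q) = \<pi> x + \<pi> y"
  using P unfolding proj_model_def by blast

lemma pi_scale: "x \<in> Phat s t e D \<Longrightarrow> \<pi> (\<lambda>q. c * x q) = scale c (\<pi> x)"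
  using P unfolding proj_model_def by blast

lemma pi_zero: "\<pi> (\<lambda>q. 0) = 0"
proof -
  interpret V: vector_space scale by (rule P_vector_space)
  have "\<pi> (\<lambda>q. 0 * (0::'k)) = scale 0 (\<pi> (\<lambda>q. 0))" by (rule pi_scale[OF Phat_zero])
  then show ?thesis by simp
qed

lemma pi_sum:
  assumes "finite J" "\<And>j. j \<in> J \<Longrightarrow> y j \<in> Phat s t e D"
  shows "(\<lambda>q. \<Sum>j\<in>J. a j * y j q) \<in> Phat s t e D \<and> \<pi> (\<lambda>q. \<Sum>j\<in>J. a j * y j q) = (\<Sum>j\<in>J. scale (a j) (\<pi> (y j)))"
  using assms
proof (induction J rule: finite_induct)
  case empty then show ?case using Phat_zero pi_zero by simp
next
  case (insert j J)
  have y: "y j \<in> Phat s t e D" using insert by simp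
  have IH: "(\<lambda>q. \<Sum>j\<in>J. a j * y j q) \<in> Phat s t e D \<and> \<pi> (\<lambda>q. \<Sum>j\<in>J. a j * y j q) = (\<Sum>j\<in>J. scale (a j) (\<pi> (y j)))"
    using insert by simp
  have e1: "(\<lambda>q. \<Sum>j\<in>insert j J. a j * y j q) = (\<lambda>q. (a j * y j q) + (\<Sum>j\<in>J. a j * y j q))"
    using insert by simp
  show ?case unfolding e1
    using Phat_add[OF Phat_scale[OF y] conjunct1[OF IH]] pi_add[OF Phat_scale[OF y] conjunct1[OF IH]]
      pi_scale[OF y] IH insert by simp
qed

lemma pi_diff:
  assumes "x \<in> Phat s t e D" "y \<in> Phat s t e D"
  shows "(\<lambda>q. x q - y q) \<in> Phat s t e D \<and> \<pi> (\<lambda>q. x q - y q) = \<pi> x - \<pi> y"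
proof -
  interpret V: vector_space scale by (rule P_vector_space)
  have h: "(\<lambda>q. x q - y q) = (\<lambda>q. x q + (-1) * y q)" by simp
  have m: "(\<lambda>q. x q + (-1) * y q) \<in> Phat s t e D" by (rule Phat_add[OF assms(1) Phat_scale[OF assms(2)]])
  have eq: "\<pi> (\<lambda>q. x q + (-1) * y q) = \<pi> x + scale (-1) (\<pi> y)"
    by (rule trans[OF pi_add[OF assms(1) Phat_scale[OF assms(2)]]]) (simp only: pi_scale[OF assms(2)])
  have eq2: "\<pi> (\<lambda>q. x q + (-1) * y q) = \<pi> x - \<pi> y" unfolding eq by simp
  show ?thesis unfolding h using m eq2 by blast
qed

lemma pi_comb:
  assumes "x \<in> Phat s t e D" "finite J" "\<And>j. j \<in> J \<Longrightarrow> y j \<in> Phat s t e D"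
  shows "(\<lambda>q. x q - (\<Sum>j\<in>J. a j * y j q)) \<in> Phat s t e D \<and>
         \<pi> (\<lambda>q. x q - (\<Sum>j\<in>J. a j * y j q)) = \<pi> x - (\<Sum>j\<in>J. scale (a j) (\<pi> (y j)))"
  using pi_diff[OF assms(1) conjunct1[OF pi_sum[OF assms(2,3)]]] pi_sum[OF assms(2,3)] by simp

lemma Phat_repr:
  assumes "x \<in> Phat s t e D"
  shows "\<pi> x = (\<Sum>q\<in>{q. x q \<noteq> 0}. scale (x q) (pi_path \<pi> q))"
proof -
  let ?F = "{q. x q \<noteq> 0}"
  have fin: "finite ?F" using assms unfolding Phat_def by blast
  have pp: "q \<in> ppaths s t e D" if "q \<in> ?F" for q
    using assms that unfolding Phat_def ppaths_def by (cases q) auto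
  have "x = (\<lambda>q'. \<Sum>q\<in>?F. x q * delta q q')"
  proof
    fix q'
    have "(\<Sum>q\<in>?F. x q * delta q q') = (\<Sum>q\<in>?F. if q = q' then x q' else 0)"
      by (rule sum.cong) (auto simp: delta_def)
    also have "\<dots> = x q'" using fin by (simp add: sum.delta')
    finally show "x q' = (\<Sum>q\<in>?F. x q * delta q q')" by simp
  qed
  then have "\<pi> x = \<pi> (\<lambda>q'. \<Sum>q\<in>?F. x q * delta q q')" by simp
  also have "\<dots> = (\<Sum>q\<in>?F. scale (x q) (\<pi> (delta q)))"
    using pi_sum[OF fin, of delta x] delta_Phat pp by blast
  finally show ?thesis unfolding pi_path_def .
qed

lemma pi_long:
  assumes adm: "admissible_ideal s t I" and loewy: "loewy_length_is s t I (L + 1)"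
    and q: "q \<in> ppaths s t e D" and len: "L + 1 \<le> path_len (fst q)"
  shows "pi_path \<pi> q = 0"
proof -
  have "delta q \<in> Ihat s t I e D"
    unfolding Ihat_def
  proof (intro CollectI conjI allI)
    show "delta q \<in> Phat s t e D" by (rule delta_Phat[OF q])
    fix r
    show "(\<lambda>p. delta q (p, r)) \<in> I"
    proof (cases "r = snd q")
      case True
      have "(\<lambda>p. delta q (p, r)) = (delta (fst q) :: _ \<Rightarrow> 'k)" using True by (cases q) (auto simp: delta_def)
      moreover have "is_path s t (fst q)" using q unfolding ppaths_def by auto
      moreover have l1: "\<forall>p. is_path s t p \<and> path_len p \<ge> L + 1 \<longrightarrow> (delta p :: _ \<Rightarrow> 'k) \<in> I"
        using loewy unfolding loewy_length_is_def by blast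
      moreover have "(delta (fst q) :: _ \<Rightarrow> 'k) \<in> I" using l1 len \<open>is_path s t (fst q)\<close> by blast
      ultimately show ?thesis by simp
    next
      case False
      have "(\<lambda>p. delta q (p, r)) = (\<lambda>_. 0::'k)" using False by (cases q) (auto simp: delta_def)
      then show ?thesis using adm unfolding admissible_ideal_def by auto
    qed
  qed
  then show ?thesis using P delta_Phat[OF q] unfolding proj_model_def pi_path_def by blast
qed


lemma radP_sub: "module.subspace scale (radP s t e D \<pi> l)"
proof -
  interpret V: vector_space scale by (rule P_vector_space)
  show ?thesis unfolding V.subspace_def
  proof (intro conjI allI ballI)
    show "0 \<in> radP s t e D \<pi> l" unfolding radP_def
      using Phat_zero pi_zero by (intro CollectI exI[of _ "\<lambda>q. 0"]) auto
  next
    fix x y assume x: "x \<in> radP s t e D \<pi> l" and y: "y \<in> radP s t e D \<pi> l"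
    obtain x' where x': "x = \<pi> x'" "x' \<in> Phat s t e D" "\<forall>p r. x' (p, r) \<noteq> 0 \<longrightarrow> path_len p \<ge> l"
      using x unfolding radP_def by blast
    obtain y' where y': "y = \<pi> y'" "y' \<in> Phat s t e D" "\<forall>p r. y' (p, r) \<noteq> 0 \<longrightarrow> path_len p \<ge> l"
      using y unfolding radP_def by blast
    have "\<forall>p r. x' (p, r) + y' (p, r) \<noteq> 0 \<longrightarrow> path_len p \<ge> l"
      using x'(3) y'(3) by (metis add.left_neutral)
    then show "x + y \<in> radP s t e D \<pi> l" unfolding radP_def
      using x' y' Phat_add pi_add by (intro CollectI exI[of _ "\<lambda>q. x' q + y' q"]) auto
  next
    fix c x assume x: "x \<in> radP s t e D \<pi> l"
    obtain x' where x': "x = \<pi> x'" "x' \<in> Phat s t e D" "\<forall>p r. x' (p, r) \<noteq> 0 \<longrightarrow> path_len p \<ge> l"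
      using x unfolding radP_def by blast
    have "\<forall>p r. c * x' (p, r) \<noteq> 0 \<longrightarrow> path_len p \<ge> l"
      using x'(3) by auto
    then show "scale c x \<in> radP s t e D \<pi> l" unfolding radP_def
      using x' Phat_scale pi_scale by (intro CollectI exI[of _ "\<lambda>q. c * x' q"]) auto
  qed
qed

lemma vtx_sub:
  assumes M: "module.subspace scale M"
  shows "module.subspace scale (vtx_part s t e D \<pi> i M)"
proof -
  interpret V: vector_space scale by (rule P_vector_space)
  show ?thesis unfolding V.subspace_def vtx_Eop
  proof (intro conjI allI ballI)
    show "0 \<in> {\<pi> (Eop s t i x) |x. x \<in> Phat s t e D \<and> \<pi> x \<in> M}"
      by (intro CollectI exI[of _ "\<lambda>q. 0"]) (simp add: Eop_zero Phat_zero pi_zero V.subspace_0[OF M])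
  next
    fix x y assume x: "x \<in> {\<pi> (Eop s t i x) |x. x \<in> Phat s t e D \<and> \<pi> x \<in> M}"
      and y: "y \<in> {\<pi> (Eop s t i x) |x. x \<in> Phat s t e D \<and> \<pi> x \<in> M}"
    obtain x' where x': "x = \<pi> (Eop s t i x')" "x' \<in> Phat s t e D" "\<pi> x' \<in> M" using x by blast
    obtain y' where y': "y = \<pi> (Eop s t i y')" "y' \<in> Phat s t e D" "\<pi> y' \<in> M" using y by blast
    have "x + y = \<pi> (Eop s t i (\<lambda>q. x' q + y' q))"
      unfolding Eop_add x' y' using x'(2) y'(2) by (simp add: pi_add Eop_Phat)
    moreover have "\<pi> (\<lambda>q. x' q + y' q) \<in> M"
      using pi_add[OF x'(2) y'(2)] V.subspace_add[OF M x'(3) y'(3)] by simp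
    moreover have "(\<lambda>q. x' q + y' q) \<in> Phat s t e D" using Phat_add[OF x'(2) y'(2)] .
    ultimately show "x + y \<in> {\<pi> (Eop s t i x) |x. x \<in> Phat s t e D \<and> \<pi> x \<in> M}" by blast
  next
    fix c x assume x: "x \<in> {\<pi> (Eop s t i x) |x. x \<in> Phat s t e D \<and> \<pi> x \<in> M}"
    obtain x' where x': "x = \<pi> (Eop s t i x')" "x' \<in> Phat s t e D" "\<pi> x' \<in> M" using x by blast
    have "scale c x = \<pi> (Eop s t i (\<lambda>q. c * x' q))"
      unfolding Eop_scale x' using x'(2) by (simp add: pi_scale Eop_Phat)
    moreover have "\<pi> (\<lambda>q. c * x' q) \<in> M"
      using pi_scale[OF x'(2)] V.subspace_scale[OF M x'(3)] by simp
    moreover have "(\<lambda>q. c * x' q) \<in> Phat s t e D" using Phat_scale[OF x'(2)] .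
    ultimately show "scale c x \<in> {\<pi> (Eop s t i x) |x. x \<in> Phat s t e D \<and> \<pi> x \<in> M}" by blast
  qed
qed

lemma radP_top:
  assumes adm: "admissible_ideal s t I" and loewy: "loewy_length_is s t I (L + 1)"
  shows "radP s t e D \<pi> (L + 1) \<subseteq> {0}"
proof
  fix y assume "y \<in> radP s t e D \<pi> (L + 1)"
  then obtain x where x: "y = \<pi> x" "x \<in> Phat s t e D" "\<forall>p r. x (p, r) \<noteq> 0 \<longrightarrow> path_len p \<ge> L + 1"
    unfolding radP_def by blast
  interpret V: vector_space scale by (rule P_vector_space)
  have "\<pi> x = (\<Sum>q\<in>{q. x q \<noteq> 0}. scale (x q) (pi_path \<pi> q))" by (rule Phat_repr[OF x(2)])
  also have "\<dots> = 0"
  proof (rule sum.neutral, rule ballI)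
    fix q assume q: "q \<in> {q. x q \<noteq> 0}"
    have "q \<in> ppaths s t e D" using x(2) q unfolding Phat_def ppaths_def by (cases q) auto
    moreover have "L + 1 \<le> path_len (fst q)" using x(3) q by (cases q) auto
    ultimately show "scale (x q) (pi_path \<pi> q) = 0" using pi_long[OF adm loewy] by simp
  qed
  finally show "y \<in> {0}" using x by simp
qed

end

section \<open>The radical layering of P/C\<close>

definition layer :: "('e \<Rightarrow> 'v) \<Rightarrow> ('e \<Rightarrow> 'v) \<Rightarrow> (nat \<Rightarrow> 'v) \<Rightarrow> nat \<Rightarrow> ((('v,'e) ppath \<Rightarrow> 'k::field) \<Rightarrow> 'p)
    \<Rightarrow> 'p::ab_group_add set \<Rightarrow> 'v \<Rightarrow> nat \<Rightarrow> 'p set" where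
  "layer s t e D \<pi> C i l = vtx_part s t e D \<pi> i (set_plus (radP s t e D \<pi> l) C)"

definition sigma_layer :: "('e \<Rightarrow> 'v) \<Rightarrow> ('v,'e) ppath set \<Rightarrow> 'v \<Rightarrow> nat \<Rightarrow> ('v,'e) ppath set" where
  "sigma_layer t \<sigma> i l = {x\<in>\<sigma>. l \<le> path_len (fst x) \<and> path_end t (fst x) = i}"

lemma sigma_layer_card:
  assumes "finite \<sigma>"
  shows "card (sigma_layer t \<sigma> i l) = layer_mult t \<sigma> l i + card (sigma_layer t \<sigma> i (Suc l))"
proof -
  have "sigma_layer t \<sigma> i l
      = {q \<in> \<sigma>. path_len (fst q) = l \<and> path_end t (fst q) = i} \<union> sigma_layer t \<sigma> i (Suc l)"
    unfolding sigma_layer_def by auto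
  moreover have "{q \<in> \<sigma>. path_len (fst q) = l \<and> path_end t (fst q) = i} \<inter> sigma_layer t \<sigma> i (Suc l) = {}"
    unfolding sigma_layer_def by auto
  ultimately show ?thesis unfolding layer_mult_def using assms
    by (simp add: card_Un_disjoint sigma_layer_def)
qed

lemma GRASS_submod:
  assumes "C \<in> GRASS s t e D L d scale \<pi> \<sigma>"
  shows "module.subspace scale C"
    "\<And>f x. f \<in> KQ s t \<Longrightarrow> x \<in> Phat s t e D \<Longrightarrow> \<pi> x \<in> C \<Longrightarrow> \<pi> (act s t f x) \<in> C"
    "basis_mod scale C (pi_path \<pi>) \<sigma>"
  using assms unfolding GRASS_def submod_def by blast+

context
  fixes s t :: "'e \<Rightarrow> 'v" and I :: "(('v,'e) path \<Rightarrow> 'k::field) set" and e :: "nat \<Rightarrow> 'v" and D :: nat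
    and scale :: "'k \<Rightarrow> 'p::ab_group_add \<Rightarrow> 'p" and \<pi> :: "(('v,'e) ppath \<Rightarrow> 'k) \<Rightarrow> 'p"
    and L :: nat and d :: "'v \<Rightarrow> nat" and \<sigma> :: "('v,'e) ppath set" and C :: "'p set"
  assumes P: "proj_model s t I e D scale \<pi>" and C: "C \<in> GRASS s t e D L d scale \<pi> \<sigma>"
begin

lemma path_in_layer:
  assumes q: "q \<in> ppaths s t e D" "l \<le> path_len (fst q)" "path_end t (fst q) = i"
  shows "pi_path \<pi> q \<in> layer s t e D \<pi> C i l"
proof -
  interpret V: vector_space scale by (rule P_vector_space[OF P])
  have dq: "delta q \<in> Phat s t e D" by (rule delta_Phat[OF q(1)])
  have "\<pi> (delta q) \<in> radP s t e D \<pi> l"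
    unfolding radP_def using dq q(2) by (intro CollectI exI[of _ "delta q"]) (auto simp: delta_def)
  then have "\<pi> (delta q) + 0 \<in> set_plus (radP s t e D \<pi> l) C"
    unfolding set_plus_def using V.subspace_0[OF GRASS_submod(1)[OF C]] by blast
  moreover have "act s t (delta (i, [])) (delta q) = (delta q :: _ \<Rightarrow> 'k)"
    unfolding act_idem by (rule Eop_delta[OF q(1) q(3)])
  ultimately show ?thesis unfolding layer_def vtx_part_def pi_path_def
    by (intro CollectI exI[of _ "delta q"]) (simp add: dq)
qed

text \<open>Since J^(L+1) P = 0, the top layer lies in C and in every other layer.\<close>
lemma top_layer:
  assumes adm: "admissible_ideal s t I" and loewy: "loewy_length_is s t I (L + 1)"
  shows "layer s t e D \<pi> C i (L + 1) \<subseteq> C" "layer s t e D \<pi> C i (L + 1) \<subseteq> layer s t e D \<pi> C i l"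
proof -
  interpret V: vector_space scale by (rule P_vector_space[OF P])
  have inC: "\<pi> x \<in> C" if "\<pi> x \<in> set_plus (radP s t e D \<pi> (L + 1)) C" for x
    using that radP_top[OF P adm loewy] unfolding set_plus_def by auto
  have ei: "is_path s t (i, [])" unfolding is_path_def by simp
  have shift: "\<pi> x \<in> set_plus (radP s t e D \<pi> l) C" if "\<pi> x \<in> C" for x
  proof -
    have "0 + \<pi> x \<in> set_plus (radP s t e D \<pi> l) C"
      using that V.subspace_0[OF radP_sub[OF P]] unfolding set_plus_def by blast
    then show ?thesis by simp
  qed
  show "layer s t e D \<pi> C i (L + 1) \<subseteq> C"
  proof
    fix y assume "y \<in> layer s t e D \<pi> C i (L + 1)"
    then obtain x where x: "y = \<pi> (act s t (delta (i, [])) x)" "x \<in> Phat s t e D"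
        "\<pi> x \<in> set_plus (radP s t e D \<pi> (L + 1)) C"
      unfolding layer_def vtx_part_def by blast
    show "y \<in> C" unfolding x(1) by (rule GRASS_submod(2)[OF C delta_KQ[OF ei] x(2) inC[OF x(3)]])
  qed
  show "layer s t e D \<pi> C i (L + 1) \<subseteq> layer s t e D \<pi> C i l"
  proof
    fix y assume "y \<in> layer s t e D \<pi> C i (L + 1)"
    then obtain x where x: "y = \<pi> (act s t (delta (i, [])) x)" "x \<in> Phat s t e D"
        "\<pi> x \<in> set_plus (radP s t e D \<pi> (L + 1)) C"
      unfolding layer_def vtx_part_def by blast
    then show "y \<in> layer s t e D \<pi> C i l"
      unfolding layer_def vtx_part_def using shift[OF inC[OF x(3)]] by blast
  qed
qed

lemma layer_dim:
  assumes skel: "skeleton s t e D L \<sigma>" and fins: "finite \<sigma>" and m: "m \<le> L + 1"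
  shows "vector_space.dim scale (layer s t e D \<pi> C i m)
       = card (sigma_layer t \<sigma> i m) + vector_space.dim scale (layer s t e D \<pi> C i (L + 1))"
proof -
  interpret V: vector_space scale by (rule P_vector_space[OF P])
  let ?V = "layer s t e D \<pi> C i" and ?S = "sigma_layer t \<sigma> i"
  have step: "V.dim (?V l) = layer_mult t \<sigma> l i + V.dim (?V (Suc l))" if "l \<le> L" for l
    using C that unfolding GRASS_def layer_def by blast
  have "\<forall>x\<in>\<sigma>. path_len (fst x) \<le> L" using skel unfolding skeleton_def by auto
  then have top: "?S (L + 1) = {}" unfolding sigma_layer_def by force
  have "V.dim (?V (L + 1 - k)) = card (?S (L + 1 - k)) + V.dim (?V (L + 1))" if "k \<le> L + 1" for k
    using that
  proof (induction k)
    case 0 then show ?case using top by simp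
  next
    case (Suc k)
    have l: "Suc (L + 1 - Suc k) = L + 1 - k" using Suc.prems by simp
    have "V.dim (?V (L + 1 - Suc k)) = layer_mult t \<sigma> (L + 1 - Suc k) i + V.dim (?V (L + 1 - k))"
      using step[of "L + 1 - Suc k"] l by simp
    also have "\<dots> = card (?S (L + 1 - Suc k)) + V.dim (?V (L + 1))"
      using Suc sigma_layer_card[OF fins, of t i "L + 1 - Suc k"] l by simp
    finally show ?case .
  qed
  from this[of "L + 1 - m"] show ?thesis using m by simp
qed

text \<open>The skeleton
  paths of the layers, together with a basis of the top layer, have the right number of
  elements and are independent, hence span the layer containing rho.\<close>
lemma reduce_to_sigma_layer:
  assumes adm: "admissible_ideal s t I" and loewy: "loewy_length_is s t I (L + 1)"
    and skel: "skeleton s t e D L \<sigma>" and fins: "finite \<sigma>"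
    and Bs: "finite Bs" "module.independent scale Bs" "module.span scale Bs = UNIV"
    and rho: "\<rho> \<in> ppaths s t e D" "path_len (fst \<rho>) \<le> L"
  shows "\<exists>lam. (\<forall>x\<in>\<sigma>. lam x \<noteq> 0 \<longrightarrow> x \<in> sigma_of t \<sigma> \<rho>)
            \<and> pi_path \<pi> \<rho> - (\<Sum>x\<in>\<sigma>. scale (lam x) (pi_path \<pi> x)) \<in> C"
proof -
  interpret V: vector_space scale by (rule P_vector_space[OF P])
  interpret F: finite_dimensional_vector_space scale Bs
    using P_vector_space[OF P] Bs
    by (simp add: finite_dimensional_vector_space_def finite_dimensional_vector_space_axioms_def)
  define i where "i = path_end t (fst \<rho>)"
  define m where "m = path_len (fst \<rho>)"
  let ?V = "layer s t e D \<pi> C i" and ?S = "sigma_layer t \<sigma> i m"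
  have subC: "V.subspace C" by (rule GRASS_submod(1)[OF C])
  obtain \<beta> where \<beta>: "\<beta> \<subseteq> ?V (L + 1)" "V.independent \<beta>" "?V (L + 1) \<subseteq> V.span \<beta>"
      "card \<beta> = V.dim (?V (L + 1))"
    using V.basis_exists by blast
  have \<beta>C: "\<beta> \<subseteq> C" by (rule subset_trans[OF \<beta>(1) top_layer(1)[OF adm loewy]])
  have fin\<beta>: "finite \<beta>" using F.finiteI_independent[OF \<beta>(2)] .
  have S\<sigma>: "?S \<subseteq> \<sigma>" unfolding sigma_layer_def by auto
  have inj: "inj_on (pi_path \<pi>) ?S"
    using basis_mod_inj(1)[OF P_vector_space[OF P] GRASS_submod(3)[OF C] subC fins] S\<sigma> by (rule inj_on_subset)
  have disj: "\<beta> \<inter> pi_path \<pi> ` ?S = {}"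
    using basis_mod_inj(2)[OF P_vector_space[OF P] GRASS_submod(3)[OF C] subC fins] \<beta>C S\<sigma> by blast
  have ind: "V.independent (\<beta> \<union> pi_path \<pi> ` ?S)"
    by (rule basis_mod_independent_union[OF P_vector_space[OF P] GRASS_submod(3)[OF C] subC fins S\<sigma> \<beta>C fin\<beta> \<beta>(2)])
  have finS: "finite ?S" using finite_subset[OF S\<sigma> fins] .
  have "card (pi_path \<pi> ` ?S) = card ?S" by (rule card_image[OF inj])
  then have "card (\<beta> \<union> pi_path \<pi> ` ?S) = card \<beta> + card ?S"
    using card_Un_disjoint[OF fin\<beta> _ disj] finS by simp
  also have "\<dots> = V.dim (?V m)"
    using layer_dim[OF skel fins, of m i] rho(2) \<beta>(4) unfolding m_def by simp
  finally have card_eq: "card (\<beta> \<union> pi_path \<pi> ` ?S) = V.dim (?V m)" .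
  have "pi_path \<pi> ` ?S \<subseteq> ?V m"
  proof
    fix y assume "y \<in> pi_path \<pi> ` ?S"
    then obtain x where x: "x \<in> ?S" "y = pi_path \<pi> x" by blast
    have "x \<in> ppaths s t e D" using x(1) skel unfolding sigma_layer_def skeleton_def by blast
    then show "y \<in> ?V m" using path_in_layer[of x m i] x unfolding sigma_layer_def by simp
  qed
  then have "\<beta> \<union> pi_path \<pi> ` ?S \<subseteq> ?V m" using \<beta>(1) top_layer(2)[OF adm loewy, of i m] by blast
  then have "?V m \<subseteq> V.span (\<beta> \<union> pi_path \<pi> ` ?S)"
    by (rule F.card_ge_dim_independent[OF _ ind]) (simp add: card_eq)
  moreover have "pi_path \<pi> \<rho> \<in> ?V m" by (rule path_in_layer[OF rho(1)]) (simp_all add: m_def i_def)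
  ultimately obtain a y where ay: "pi_path \<pi> \<rho> = a + y" "a \<in> V.span \<beta>" "y \<in> V.span (pi_path \<pi> ` ?S)"
    unfolding V.span_Un by blast
  have aC: "a \<in> C" using ay(2) V.span_minimal[OF \<beta>C subC] by blast
  obtain g where g: "y = (\<Sum>x\<in>?S. scale (g x) (pi_path \<pi> x))"
    using span_image_repr[OF P_vector_space[OF P] finite_subset[OF S\<sigma> fins] ay(3)] by blast
  define lam where "lam x = (if x \<in> ?S then g x else 0)" for x
  have "(\<Sum>x\<in>\<sigma>. scale (lam x) (pi_path \<pi> x)) = y"
    unfolding g lam_def by (rule sum.mono_neutral_cong_right) (use fins S\<sigma> in auto)
  then have "pi_path \<pi> \<rho> - (\<Sum>x\<in>\<sigma>. scale (lam x) (pi_path \<pi> x)) \<in> C" using ay(1) aC by simp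
  moreover have "\<forall>x\<in>\<sigma>. lam x \<noteq> 0 \<longrightarrow> x \<in> sigma_of t \<sigma> \<rho>"
    unfolding lam_def sigma_layer_def sigma_of_def m_def i_def by auto
  ultimately show ?thesis by blast
qed

end

section \<open>Reduction of paths modulo C\<close>

lemma sigma_coeff_zero:
  assumes vsp: "vector_space scale" and C: "C \<in> GRASS s t e D L d scale \<pi> \<sigma>"
    and bij: "bij_betw b {1..D} \<sigma>"
    and sC: "(\<Sum>j\<in>{1..D}. scale (a j) (pi_path \<pi> (b j))) \<in> C" and j: "j \<in> {1..D}"
  shows "a j = 0"
proof -
  have inj: "inj_on b {1..D}" using bij bij_betw_def by blast
  define lam where "lam x = a (the_inv_into {1..D} b x)" for x
  have "(\<Sum>x\<in>\<sigma>. scale (lam x) (pi_path \<pi> x)) = (\<Sum>j\<in>{1..D}. scale (lam (b j)) (pi_path \<pi> (b j)))"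
    using sum.reindex_bij_betw[OF bij, of "\<lambda>x. scale (lam x) (pi_path \<pi> x)"] by simp
  also have "\<dots> = (\<Sum>j\<in>{1..D}. scale (a j) (pi_path \<pi> (b j)))"
    unfolding lam_def
  proof (rule sum.cong)
    fix x assume "x \<in> {1..D}"
    then have "the_inv_into {1..D} b (b x) = x" by (rule the_inv_into_f_f[OF inj])
    then show "scale (a (the_inv_into {1..D} b (b x))) (pi_path \<pi> (b x)) = scale (a x) (pi_path \<pi> (b x))"
      by simp
  qed simp
  finally have "(\<Sum>x\<in>\<sigma>. scale (lam x) (pi_path \<pi> x)) \<in> C" using sC by simp
  then have "\<forall>x\<in>\<sigma>. lam x = 0" by (rule basis_mod_coeffs_zero[OF GRASS_submod(3)[OF C]])
  then have "lam (b j) = 0" using bij_betw_apply[OF bij j] by blast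
  then show ?thesis unfolding lam_def using the_inv_into_f_f[OF inj j] by simp
qed

lemma ppath_cat:
  assumes "x \<in> ppaths s t e D" "is_path s t p2" "path_end t (fst x) = fst p2"
  shows "(cat (fst x) p2, snd x) \<in> ppaths s t e D"
  using assms is_path_cat[of s t "fst x" p2] unfolding ppaths_def cat_def by auto

lemma right_mult_relation:
  fixes q :: "('v,'e) ppath" and p2 :: "('v,'e) path" and \<pi> :: "(('v,'e) ppath \<Rightarrow> 'k::field) \<Rightarrow> 'p::ab_group_add"
  assumes P: "proj_model s t I e D scale \<pi>" and C: "C \<in> GRASS s t e D L d scale \<pi> \<sigma>"
    and q: "q \<in> ppaths s t e D" and y: "\<And>j. j \<in> J \<Longrightarrow> y j \<in> ppaths s t e D" and J: "finite J"
    and p2: "is_path s t p2" and ends: "path_end t (fst q) = fst p2"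
      "\<And>j. j \<in> J \<Longrightarrow> path_end t (fst (y j)) = fst p2"
    and rel: "pi_path \<pi> q - (\<Sum>j\<in>J. scale (\<gamma> j) (pi_path \<pi> (y j))) \<in> C"
  shows "pi_path \<pi> (cat (fst q) p2, snd q)
           - (\<Sum>j\<in>J. scale (\<gamma> j) (pi_path \<pi> (cat (fst (y j)) p2, snd (y j)))) \<in> C"
proof -
  let ?mult = "\<lambda>x::('v,'e) ppath. (cat (fst x) p2, snd x)"
  have path: "is_path s t (fst x)" if "x \<in> ppaths s t e D" for x
    using that unfolding ppaths_def by auto
  have act_mult: "act s t (delta p2) (delta x) = (delta (?mult x) :: _ \<Rightarrow> 'k)"
    if "x \<in> ppaths s t e D" "path_end t (fst x) = fst p2" for x
    using act_delta_cat[OF path[OF that(1)] p2 that(2), of "snd x"] by simp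
  let ?x = "\<lambda>z. delta q z - (\<Sum>j\<in>J. \<gamma> j * delta (y j) z)"
  have x: "?x \<in> Phat s t e D \<and> \<pi> ?x = pi_path \<pi> q - (\<Sum>j\<in>J. scale (\<gamma> j) (pi_path \<pi> (y j)))"
    unfolding pi_path_def by (rule pi_comb[OF P delta_Phat[OF q] J delta_Phat[OF y]])
  have "(\<Sum>j\<in>J. \<gamma> j * act s t (delta p2) (delta (y j)) z) = (\<Sum>j\<in>J. \<gamma> j * delta (?mult (y j)) z)" for z
    by (rule sum.cong[OF refl]) (simp add: act_mult y ends(2))
  then have "act s t (delta p2) ?x = (\<lambda>z. delta (?mult q) z - (\<Sum>j\<in>J. \<gamma> j * delta (?mult (y j)) z))"
    unfolding act_lin[OF J] act_mult[OF q ends(1)] by simp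
  moreover have "\<pi> (act s t (delta p2) ?x) \<in> C"
    using GRASS_submod(2)[OF C delta_KQ[OF p2]] x rel by simp
  moreover have "\<pi> (\<lambda>z. delta (?mult q) z - (\<Sum>j\<in>J. \<gamma> j * delta (?mult (y j)) z))
      = pi_path \<pi> (?mult q) - (\<Sum>j\<in>J. scale (\<gamma> j) (pi_path \<pi> (?mult (y j))))"
    unfolding pi_path_def
    by (rule conjunct2[OF pi_comb[OF P delta_Phat[OF ppath_cat[OF q p2 ends(1)]] J delta_Phat[OF ppath_cat[OF y p2 ends(2)]]]])
  ultimately show ?thesis by simp
qed

text \<open>The length of the shortest initial subpath of rho outside sigma (length rho + 1 if
  there is none).  Together with the length it measures the progress of the reduction.\<close>
definition first_exit :: "('v,'e) ppath set \<Rightarrow> ('v,'e) ppath \<Rightarrow> nat" where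
  "first_exit \<sigma> \<rho> = (LEAST j. path_len (fst \<rho>) < j \<or> (init_sub j (fst \<rho>), snd \<rho>) \<notin> \<sigma>)"

text \<open>Reductions go towards longer paths, and among paths of equal length towards later
  first exits; both are bounded, which yields a well-founded rank.\<close>
definition reduction_rank :: "nat \<Rightarrow> ('v,'e) ppath set \<Rightarrow> ('v,'e) ppath \<Rightarrow> nat" where
  "reduction_rank L \<sigma> \<rho> = (L + 2 - path_len (fst \<rho>)) * (L + 3) + (L + 2 - first_exit \<sigma> \<rho>)"

lemma first_exit_le: "first_exit \<sigma> \<rho> \<le> path_len (fst \<rho>) + 1"
  unfolding first_exit_def by (rule Least_le) simp

lemma first_exit_gt:
  assumes "\<forall>y\<le>k. y \<le> path_len (fst \<rho>) \<and> (init_sub y (fst \<rho>), snd \<rho>) \<in> \<sigma>"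
  shows "k < first_exit \<sigma> \<rho>"
proof (rule ccontr)
  assume "\<not> k < first_exit \<sigma> \<rho>"
  moreover have "path_len (fst \<rho>) < first_exit \<sigma> \<rho> \<or> (init_sub (first_exit \<sigma> \<rho>) (fst \<rho>), snd \<rho>) \<notin> \<sigma>"
    unfolding first_exit_def by (rule LeastI[of _ "path_len (fst \<rho>) + 1"]) simp
  ultimately show False using assms by auto
qed

lemma critical_factorisation:
  assumes rho: "\<rho> \<in> ppaths s t e D" "path_len (fst \<rho>) \<le> L" "\<rho> \<notin> \<sigma>"
  obtains q p2 where "critical s t e D L \<sigma> q" "is_path s t p2" "path_end t (fst q) = fst p2"
    "fst \<rho> = cat (fst q) p2" "snd q = snd \<rho>" "path_len (fst q) = first_exit \<sigma> \<rho>"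
proof -
  obtain p r where pr: "\<rho> = (p, r)" by (cases \<rho>)
  define m where "m = first_exit \<sigma> \<rho>"
  have full: "(init_sub (path_len p) p, r) \<notin> \<sigma>"
    using rho(3) pr unfolding init_sub_def path_len_def by simp
  have m_le: "m \<le> path_len p"
    unfolding m_def first_exit_def pr fst_conv snd_conv by (rule Least_le) (use full in simp)
  have "path_len p < m \<or> (init_sub m p, r) \<notin> \<sigma>"
    unfolding m_def first_exit_def pr fst_conv snd_conv by (rule LeastI[of _ "path_len p"]) (use full in simp)
  then have m_notin: "(init_sub m p, r) \<notin> \<sigma>" using m_le by simp
  have m_pre: "(init_sub j p, r) \<in> \<sigma>" if "j < m" for j
    using not_less_Least[OF that[unfolded m_def first_exit_def pr fst_conv snd_conv]] that m_le by auto
  have pp: "is_path s t p" "fst p = e r" "r \<in> {1..D}" using rho(1) pr unfolding ppaths_def by auto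
  have lenq: "path_len (init_sub m p) = m" using m_le unfolding init_sub_def path_len_def by simp
  have "init_sub j (init_sub m p) = init_sub j p" if "j \<le> m" for j
    using that unfolding init_sub_def by (simp add: min_def)
  then have "\<forall>j < path_len (init_sub m p). (init_sub j (init_sub m p), r) \<in> \<sigma>"
    using m_pre lenq by simp
  moreover have "(init_sub m p, r) \<in> ppaths s t e D"
    unfolding ppaths_def using is_path_init_sub[OF pp(1)] pp by (simp add: init_sub_def)
  moreover have "path_len (init_sub m p) \<le> L" using lenq m_le rho(2) pr by simp
  ultimately have crit: "critical s t e D L \<sigma> (init_sub m p, r)"
    unfolding critical_def using m_notin by simp
  have p2: "is_path s t (path_end t (init_sub m p), drop m (snd p))" by (rule is_path_drop[OF pp(1)])
  have fac: "fst \<rho> = cat (init_sub m p) (path_end t (init_sub m p), drop m (snd p))"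
    unfolding pr by (simp add: cat_init_sub_drop)
  have len: "path_len (init_sub m p) = first_exit \<sigma> \<rho>" using lenq m_def by simp
  show ?thesis
  proof (rule that[OF crit p2])
    show "path_end t (fst (init_sub m p, r)) = fst (path_end t (init_sub m p), drop m (snd p))" by simp
    show "fst \<rho> = cat (fst (init_sub m p, r)) (path_end t (init_sub m p), drop m (snd p))" using fac by simp
    show "snd (init_sub m p, r) = snd \<rho>" using pr by simp
    show "path_len (fst (init_sub m p, r)) = first_exit \<sigma> \<rho>" using len by simp
  qed
qed

text \<open>If q = (first exit of rho) and x in sigma has length at least that of q, then x p2
  has smaller rank than rho = q p2: it is longer, or has a longer initial subpath in sigma.\<close>
lemma reduction_rank_decreases:
  assumes skel: "skeleton s t e D L \<sigma>" and len: "path_len (fst \<rho>) \<le> L"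
    and fac: "fst \<rho> = cat (fst q) p2" "path_len (fst q) = first_exit \<sigma> \<rho>"
    and x: "x \<in> \<sigma>" "path_len (fst q) \<le> path_len (fst x)"
  shows "reduction_rank L \<sigma> (cat (fst x) p2, snd x) < reduction_rank L \<sigma> \<rho>"
proof -
  let ?x' = "(cat (fst x) p2, snd x)"
  define m where "m = path_len (fst q)"
  have lens: "path_len (fst ?x') = path_len (fst x) + (path_len (fst \<rho>) - m)"
    "m \<le> path_len (fst \<rho>)"
    using fac(1) unfolding m_def cat_def path_len_def by auto
  show ?thesis
  proof (cases "m < path_len (fst x)")
    case True
    then have "L + 2 - path_len (fst ?x') < L + 2 - path_len (fst \<rho>)" using lens len by simp
    then have "Suc (L + 2 - path_len (fst ?x')) * (L + 3) \<le> (L + 2 - path_len (fst \<rho>)) * (L + 3)"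
      by (intro mult_le_mono1) simp
    then have "(L + 2 - path_len (fst ?x')) * (L + 3) + (L + 3) \<le> (L + 2 - path_len (fst \<rho>)) * (L + 3)"
      by simp
    then show ?thesis unfolding reduction_rank_def by linarith
  next
    case False
    then have same_len: "path_len (fst ?x') = path_len (fst \<rho>)" using lens x(2) unfolding m_def by simp
    have "m < first_exit \<sigma> ?x'"
    proof (rule first_exit_gt, intro allI impI conjI)
      fix y assume y: "y \<le> m"
      show "y \<le> path_len (fst ?x')" using y same_len lens(2) by simp
      have "\<forall>j \<le> path_len (fst x). (init_sub j (fst x), snd x) \<in> \<sigma>"
        using bspec[OF conjunct2[OF skel[unfolded skeleton_def]] x(1)] by (simp add: case_prod_beta)
      then have "(init_sub y (fst x), snd x) \<in> \<sigma>" using y x(2) unfolding m_def by simp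
      moreover have "init_sub y (cat (fst x) p2) = init_sub y (fst x)"
        using y x(2) False unfolding init_sub_def cat_def path_len_def m_def by simp
      ultimately show "(init_sub y (fst ?x'), snd ?x') \<in> \<sigma>" by simp
    qed
    moreover have "first_exit \<sigma> ?x' \<le> path_len (fst \<rho>) + 1"
      using first_exit_le[of \<sigma> ?x'] same_len by simp
    ultimately show ?thesis unfolding reduction_rank_def using same_len len fac(2) m_def by simp
  qed
qed

context
  fixes s t :: "'e \<Rightarrow> 'v" and I :: "(('v,'e) path \<Rightarrow> 'k::field) set" and e :: "nat \<Rightarrow> 'v" and D :: nat
    and scale :: "'k \<Rightarrow> 'p::ab_group_add \<Rightarrow> 'p" and \<pi> :: "(('v,'e) ppath \<Rightarrow> 'k) \<Rightarrow> 'p"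
    and L :: nat and d :: "'v \<Rightarrow> nat" and \<sigma> :: "('v,'e) ppath set"
    and b b' :: "nat \<Rightarrow> ('v,'e) ppath" and u :: nat
  assumes P: "proj_model s t I e D scale \<pi>" and bij: "bij_betw b {1..D} \<sigma>"
    and b'_span: "\<forall>q. critical s t e D L \<sigma> q \<longrightarrow>
                   pi_path \<pi> q \<in> module.span scale (pi_path \<pi> ` (b' ` {1..u} \<union> b ` {1..D}))"
begin

definition gen_elem :: "(nat \<times> nat \<Rightarrow> 'k) \<Rightarrow> nat \<Rightarrow> 'p" where
  "gen_elem c i = pi_path \<pi> (b' i)
      - (\<Sum>j\<in>{j\<in>{1..D}. (i, j) \<in> N0 t \<sigma> b D b' u}. scale (c (i, j)) (pi_path \<pi> (b j)))"

text \<open>C is a point of GRASS(sigma) containing the generators for the coordinates c (this holds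
  in particular when c are the coordinates of C).\<close>
definition has_generators :: "'p set \<Rightarrow> (nat \<times> nat \<Rightarrow> 'k) \<Rightarrow> bool" where
  "has_generators C c \<longleftrightarrow> C \<in> GRASS s t e D L d scale \<pi> \<sigma> \<and> (\<forall>i\<in>{1..u}. gen_elem c i \<in> C)"

definition reducible :: "('v,'e) ppath \<Rightarrow> (nat \<Rightarrow> (nat \<times> nat \<Rightarrow> 'k) \<Rightarrow> 'k) \<Rightarrow> bool" where
  "reducible \<rho> R \<longleftrightarrow> (\<forall>l. poly_fun (N0 t \<sigma> b D b' u) (R l)) \<and>
     (\<forall>C c. has_generators C c \<longrightarrow> pi_path \<pi> \<rho> - (\<Sum>l\<in>{1..D}. scale (R l c) (pi_path \<pi> (b l))) \<in> C)"

lemma has_generators_subspace: "has_generators C c \<Longrightarrow> module.subspace scale C"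
  unfolding has_generators_def using GRASS_submod(1) by blast

text \<open>A critical path is a combination of the b'_i and b_j; replacing b'_i by C'_i gives a
  polynomial reduction.\<close>
lemma critical_combination:
  assumes q: "critical s t e D L \<sigma> q"
  shows "\<exists>\<gamma>. (\<forall>j. poly_fun (N0 t \<sigma> b D b' u) (\<gamma> j)) \<and> (\<forall>C c. has_generators C c \<longrightarrow>
           pi_path \<pi> q - (\<Sum>j\<in>{1..D}. scale (\<gamma> j c) (pi_path \<pi> (b j))) \<in> C)"
proof -
  interpret V: vector_space scale by (rule P_vector_space[OF P])
  let ?N = "N0 t \<sigma> b D b' u" and ?v = "\<lambda>j. pi_path \<pi> (b j)"
  have "pi_path \<pi> q \<in> V.span (pi_path \<pi> ` (b' ` {1..u} \<union> b ` {1..D}))"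
    using b'_span q by blast
  then have "pi_path \<pi> q \<in> V.span ((pi_path \<pi> \<circ> b') ` {1..u} \<union> (pi_path \<pi> \<circ> b) ` {1..D})"
    by (simp add: image_Un image_comp)
  then obtain \<alpha> \<beta> where ab: "pi_path \<pi> q = (\<Sum>i\<in>{1..u}. scale (\<alpha> i) (pi_path \<pi> (b' i)))
        + (\<Sum>j\<in>{1..D}. scale (\<beta> j) (?v j))"
    using span_image_repr2[OF P_vector_space[OF P], of "{1..u}" "{1..D}"] by fastforce
  define \<gamma> where "\<gamma> j c = (\<Sum>i\<in>{1..u}. if (i, j) \<in> ?N then \<alpha> i * c (i, j) else 0) + \<beta> j" for j c
  have "poly_fun ?N (\<lambda>c. if (i, j) \<in> ?N then \<alpha> i * c (i, j) else 0)" for i j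
    by (cases "(i, j) \<in> ?N") (simp_all add: poly_fun_const poly_fun_mult poly_fun_var)
  then have "poly_fun ?N (\<gamma> j)" for j
    unfolding \<gamma>_def[abs_def] by (intro poly_fun_add poly_fun_sum poly_fun_const) simp_all
  moreover have "pi_path \<pi> q - (\<Sum>j\<in>{1..D}. scale (\<gamma> j c) (?v j)) \<in> C"
    if g: "has_generators C c" for C c
  proof -
    have inner: "(\<Sum>j\<in>{1..D}. scale (if (i, j) \<in> ?N then \<alpha> i * c (i, j) else 0) (?v j))
        = scale (\<alpha> i) (\<Sum>j\<in>{j\<in>{1..D}. (i, j) \<in> ?N}. scale (c (i, j)) (?v j))" for i
    proof -
      have "(\<Sum>j\<in>{1..D}. scale (if (i, j) \<in> ?N then \<alpha> i * c (i, j) else 0) (?v j))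
          = (\<Sum>j\<in>{1..D}. if (i, j) \<in> ?N then scale (\<alpha> i) (scale (c (i, j)) (?v j)) else 0)"
        by (rule sum.cong) auto
      also have "\<dots> = (\<Sum>j\<in>{j\<in>{1..D}. (i, j) \<in> ?N}. scale (\<alpha> i) (scale (c (i, j)) (?v j)))"
        by (rule sum.inter_filter[symmetric]) simp
      finally show ?thesis by (simp add: V.scale_sum_right)
    qed
    have "(\<Sum>j\<in>{1..D}. scale (\<gamma> j c) (?v j))
        = (\<Sum>i\<in>{1..u}. \<Sum>j\<in>{1..D}. scale (if (i, j) \<in> ?N then \<alpha> i * c (i, j) else 0) (?v j))
          + (\<Sum>j\<in>{1..D}. scale (\<beta> j) (?v j))"
      unfolding \<gamma>_def V.scale_left_distrib sum.distrib
      by (subst scale_double_sum[OF P_vector_space[OF P]]) simp_all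
    then have "pi_path \<pi> q - (\<Sum>j\<in>{1..D}. scale (\<gamma> j c) (?v j)) = (\<Sum>i\<in>{1..u}. scale (\<alpha> i) (gen_elem c i))"
      unfolding ab gen_elem_def inner by (simp add: V.scale_right_diff_distrib sum_subtractf)
    moreover have "(\<Sum>i\<in>{1..u}. scale (\<alpha> i) (gen_elem c i)) \<in> C"
      using g has_generators_subspace[OF g] unfolding has_generators_def
      by (intro V.subspace_sum V.subspace_scale) auto
    ultimately show ?thesis by simp
  qed
  ultimately show ?thesis by blast
qed

lemma reducible_combination:
  assumes J: "finite J" and \<gamma>: "\<And>j. j \<in> J \<Longrightarrow> poly_fun (N0 t \<sigma> b D b' u) (\<gamma> j)"
    and RR: "\<And>j. j \<in> J \<Longrightarrow> reducible (\<rho>' j) (RR j)"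
    and rel: "\<And>C c. has_generators C c \<Longrightarrow>
                pi_path \<pi> \<rho> - (\<Sum>j\<in>J. scale (\<gamma> j c) (pi_path \<pi> (\<rho>' j))) \<in> C"
  shows "reducible \<rho> (\<lambda>l c. \<Sum>j\<in>J. \<gamma> j c * RR j l c)"
  unfolding reducible_def
proof (intro conjI allI impI)
  fix l
  show "poly_fun (N0 t \<sigma> b D b' u) (\<lambda>c. \<Sum>j\<in>J. \<gamma> j c * RR j l c)"
    using \<gamma> RR unfolding reducible_def by (intro poly_fun_sum[OF J] poly_fun_mult) auto
next
  fix C c assume g: "has_generators C c"
  interpret V: vector_space scale by (rule P_vector_space[OF P])
  let ?v = "\<lambda>l. pi_path \<pi> (b l)"
  have subC: "V.subspace C" by (rule has_generators_subspace[OF g])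
  have "pi_path \<pi> \<rho> - (\<Sum>l\<in>{1..D}. scale (\<Sum>j\<in>J. \<gamma> j c * RR j l c) (?v l))
      = (pi_path \<pi> \<rho> - (\<Sum>j\<in>J. scale (\<gamma> j c) (pi_path \<pi> (\<rho>' j))))
        + (\<Sum>j\<in>J. scale (\<gamma> j c) (pi_path \<pi> (\<rho>' j) - (\<Sum>l\<in>{1..D}. scale (RR j l c) (?v l))))"
    by (simp add: scale_double_sum[OF P_vector_space[OF P] J] V.scale_sum_right
        V.scale_right_diff_distrib sum_subtractf)
  also have "\<dots> \<in> C"
    using RR g unfolding reducible_def
    by (intro V.subspace_add[OF subC rel[OF g]] V.subspace_sum[OF subC] V.subspace_scale[OF subC]) auto
  finally show "pi_path \<pi> \<rho> - (\<Sum>l\<in>{1..D}. scale (\<Sum>j\<in>J. \<gamma> j c * RR j l c) (?v l)) \<in> C" .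
qed

context
  fixes Bs :: "'p set"
  assumes adm: "admissible_ideal s t I" and loewy: "loewy_length_is s t I (L + 1)"
    and skel: "skeleton s t e D L \<sigma>" and fins: "finite \<sigma>"
    and Bs: "finite Bs" "module.independent scale Bs" "module.span scale Bs = UNIV"
begin

text \<open>Since C meets span(b_1..b_D) trivially, the reduction of a critical path q agrees with
  the one given by the radical layering, so it only involves the b_j in sigma(q).\<close>
lemma critical_reduction:
  assumes q: "critical s t e D L \<sigma> q"
  shows "\<exists>\<gamma>. (\<forall>j. poly_fun (N0 t \<sigma> b D b' u) (\<gamma> j)) \<and> (\<forall>C c. has_generators C c \<longrightarrow>
           pi_path \<pi> q - (\<Sum>j\<in>{j\<in>{1..D}. b j \<in> sigma_of t \<sigma> q}. scale (\<gamma> j c) (pi_path \<pi> (b j))) \<in> C)"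
proof -
  interpret V: vector_space scale by (rule P_vector_space[OF P])
  let ?v = "\<lambda>j. pi_path \<pi> (b j)"
  obtain \<gamma> where \<gamma>: "\<forall>j. poly_fun (N0 t \<sigma> b D b' u) (\<gamma> j)"
      "\<And>C c. has_generators C c \<Longrightarrow> pi_path \<pi> q - (\<Sum>j\<in>{1..D}. scale (\<gamma> j c) (?v j)) \<in> C"
    using critical_combination[OF q] by blast
  have "pi_path \<pi> q - (\<Sum>j\<in>{j\<in>{1..D}. b j \<in> sigma_of t \<sigma> q}. scale (\<gamma> j c) (?v j)) \<in> C"
    if g: "has_generators C c" for C c
  proof -
    have C: "C \<in> GRASS s t e D L d scale \<pi> \<sigma>" using g unfolding has_generators_def by blast
    have qq: "q \<in> ppaths s t e D" "path_len (fst q) \<le> L" using q unfolding critical_def by auto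
    obtain lam where lam: "\<forall>x\<in>\<sigma>. lam x \<noteq> 0 \<longrightarrow> x \<in> sigma_of t \<sigma> q"
        "pi_path \<pi> q - (\<Sum>x\<in>\<sigma>. scale (lam x) (pi_path \<pi> x)) \<in> C"
      using reduce_to_sigma_layer[OF P C adm loewy skel fins Bs qq] by blast
    have "(\<Sum>x\<in>\<sigma>. scale (lam x) (pi_path \<pi> x)) = (\<Sum>j\<in>{1..D}. scale (lam (b j)) (?v j))"
      using sum.reindex_bij_betw[OF bij, of "\<lambda>x. scale (lam x) (pi_path \<pi> x)"] by simp
    then have "(pi_path \<pi> q - (\<Sum>x\<in>\<sigma>. scale (lam x) (pi_path \<pi> x)))
          - (pi_path \<pi> q - (\<Sum>j\<in>{1..D}. scale (\<gamma> j c) (?v j)))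
        = (\<Sum>j\<in>{1..D}. scale (\<gamma> j c - lam (b j)) (?v j))"
      by (simp add: V.scale_left_diff_distrib sum_subtractf)
    moreover have "(pi_path \<pi> q - (\<Sum>x\<in>\<sigma>. scale (lam x) (pi_path \<pi> x)))
          - (pi_path \<pi> q - (\<Sum>j\<in>{1..D}. scale (\<gamma> j c) (?v j))) \<in> C"
      by (rule V.subspace_diff[OF has_generators_subspace[OF g] lam(2) \<gamma>(2)[OF g]])
    ultimately have inC: "(\<Sum>j\<in>{1..D}. scale (\<gamma> j c - lam (b j)) (?v j)) \<in> C" by simp
    have coeff: "\<gamma> j c = lam (b j)" if "j \<in> {1..D}" for j
      using sigma_coeff_zero[OF P_vector_space[OF P] C bij inC that] by simp
    have "(\<Sum>j\<in>{1..D}. scale (\<gamma> j c) (?v j)) = (\<Sum>j\<in>{j\<in>{1..D}. b j \<in> sigma_of t \<sigma> q}. scale (\<gamma> j c) (?v j))"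
      using coeff lam(1) bij_betw_apply[OF bij] by (intro sum.mono_neutral_right) auto
    then show ?thesis using \<gamma>(2)[OF g] by simp
  qed
  then show ?thesis using \<gamma>(1) by blast
qed

text \<open>Induction on the rank:
  long paths vanish, skeleton paths are trivial, and any other path rho = q p2 with q
  critical reduces, via the reduction of q multiplied by p2, to the paths b_j p2 of lower rank.\<close>
lemma every_path_reducible:
  "\<rho> \<in> ppaths s t e D \<Longrightarrow> \<exists>R. reducible \<rho> R"
proof (induction \<rho> rule: measure_induct_rule[of "reduction_rank L \<sigma>"])
  case (less \<rho>)
  interpret V: vector_space scale by (rule P_vector_space[OF P])
  consider (long) "L < path_len (fst \<rho>)" | (skeleton) "\<rho> \<in> \<sigma>"
    | (other) "path_len (fst \<rho>) \<le> L" "\<rho> \<notin> \<sigma>" by linarith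
  then show ?case
  proof cases
    case long
    then have "pi_path \<pi> \<rho> = 0" using pi_long[OF P adm loewy less.prems] by simp
    then have "reducible \<rho> (\<lambda>l c. 0)"
      unfolding reducible_def using has_generators_subspace V.subspace_0 by (simp add: poly_fun_const)
    then show ?thesis by blast
  next
    case skeleton
    then obtain l0 where l0: "l0 \<in> {1..D}" "b l0 = \<rho>" using bij by (metis bij_betw_iff_bijections)
    have "(\<Sum>l\<in>{1..D}. scale (if l = l0 then 1 else 0) (pi_path \<pi> (b l))) = pi_path \<pi> \<rho>"
      using sum_indicator[OF P_vector_space[OF P], of "{1..D}" l0 "\<lambda>l. pi_path \<pi> (b l)"] l0 by simp
    then have "reducible \<rho> (\<lambda>l c. if l = l0 then 1 else 0)"
      unfolding reducible_def using has_generators_subspace V.subspace_0 by (simp add: poly_fun_const)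
    then show ?thesis by blast
  next
    case other
    obtain q p2 where q: "critical s t e D L \<sigma> q" "is_path s t p2" "path_end t (fst q) = fst p2"
        "fst \<rho> = cat (fst q) p2" "snd q = snd \<rho>" "path_len (fst q) = first_exit \<sigma> \<rho>"
      using critical_factorisation[OF less.prems other] by blast
    define J where "J = {j\<in>{1..D}. b j \<in> sigma_of t \<sigma> q}"
    define \<rho>' where "\<rho>' j = (cat (fst (b j)) p2, snd (b j))" for j
    obtain \<gamma> where \<gamma>: "\<forall>j. poly_fun (N0 t \<sigma> b D b' u) (\<gamma> j)"
        "\<And>C c. has_generators C c \<Longrightarrow> pi_path \<pi> q - (\<Sum>j\<in>J. scale (\<gamma> j c) (pi_path \<pi> (b j))) \<in> C"
      using critical_reduction[OF q(1)] unfolding J_def by blast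
    have bJ: "b j \<in> \<sigma>" "path_len (fst q) \<le> path_len (fst (b j))" "path_end t (fst (b j)) = fst p2"
      if "j \<in> J" for j
      using that q(3) unfolding J_def sigma_of_def by auto
    have b_pp: "b j \<in> ppaths s t e D" if "j \<in> J" for j
      using bJ(1)[OF that] skel unfolding skeleton_def by blast
    have q_pp: "q \<in> ppaths s t e D" using q(1) unfolding critical_def by blast
    have "\<exists>R. reducible (\<rho>' j) R" if j: "j \<in> J" for j
    proof (rule less.IH)
      show "reduction_rank L \<sigma> (\<rho>' j) < reduction_rank L \<sigma> \<rho>"
        unfolding \<rho>'_def by (rule reduction_rank_decreases[OF skel other(1) q(4,6) bJ(1,2)[OF j]])
      show "\<rho>' j \<in> ppaths s t e D" unfolding \<rho>'_def by (rule ppath_cat[OF b_pp[OF j] q(2) bJ(3)[OF j]])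
    qed
    then obtain RR where RR: "\<And>j. j \<in> J \<Longrightarrow> reducible (\<rho>' j) (RR j)" by metis
    have "pi_path \<pi> \<rho> - (\<Sum>j\<in>J. scale (\<gamma> j c) (pi_path \<pi> (\<rho>' j))) \<in> C"
      if g: "has_generators C c" for C c
    proof -
      have C: "C \<in> GRASS s t e D L d scale \<pi> \<sigma>" using g unfolding has_generators_def by blast
      have "\<rho> = (cat (fst q) p2, snd q)" using q(4,5) by (simp add: prod_eq_iff)
      then show ?thesis unfolding \<rho>'_def
        using right_mult_relation[OF P C q_pp b_pp _ q(2,3) bJ(3) \<gamma>(2)[OF g]] J_def by simp
    qed
    then have "reducible \<rho> (\<lambda>l c. \<Sum>j\<in>J. \<gamma> j c * RR j l c)"
      using reducible_combination[of J \<gamma> \<rho>' RR \<rho>] \<gamma>(1) RR J_def by simp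
    then show ?thesis by blast
  qed
qed

lemma polynomial_reductions:
  assumes b'': "\<forall>k\<in>{1..v}. b'' k \<in> ppaths s t e D"
  shows "\<exists>q :: nat \<Rightarrow> nat \<Rightarrow> 'k mpoly. \<forall>k\<in>{1..v}. \<forall>l. mpoly_vars_in (q k l) (N0 t \<sigma> b D b' u) \<and>
     (\<forall>C c. C \<in> GRASS s t e D L d scale \<pi> \<sigma>
        \<and> (\<forall>i\<in>{1..u}. pi_path \<pi> (b' i)
              - (\<Sum>j\<in>{j\<in>{1..D}. (i, j) \<in> N0 t \<sigma> b D b' u}. scale (c (i, j)) (pi_path \<pi> (b j))) \<in> C)
      \<longrightarrow> pi_path \<pi> (b'' k) - (\<Sum>l\<in>{1..D}. scale (mpoly_eval (q k l) c) (pi_path \<pi> (b l))) \<in> C)"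
proof -
  have "\<forall>k\<in>{1..v}. \<exists>Rk. reducible (b'' k) Rk" using every_path_reducible b'' by blast
  from bchoice[OF this] obtain R where R: "\<forall>k\<in>{1..v}. reducible (b'' k) (R k)" ..
  define q where "q k l = (SOME p. mpoly_vars_in p (N0 t \<sigma> b D b' u) \<and> (\<forall>c. mpoly_eval p c = R k l c))" for k l
  have "mpoly_vars_in (q k l) (N0 t \<sigma> b D b' u) \<and> (\<forall>c. mpoly_eval (q k l) c = R k l c)"
    if "k \<in> {1..v}" for k l
  proof -
    have "poly_fun (N0 t \<sigma> b D b' u) (R k l)" using R that unfolding reducible_def by blast
    then have "\<exists>p. mpoly_vars_in p (N0 t \<sigma> b D b' u) \<and> (\<forall>c. mpoly_eval p c = R k l c)"
      by (rule poly_fun_mpoly)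
    then show ?thesis unfolding q_def by (rule someI_ex)
  qed
  then show ?thesis
    using R unfolding reducible_def has_generators_def gen_elem_def by (intro exI[of _ q]) simp
qed


end

end

section \<open>Unitriangular families and their wedge\<close>

context
  fixes scale :: "'k::field \<Rightarrow> 'p::ab_group_add \<Rightarrow> 'p" and w :: "nat \<Rightarrow> 'p" and N :: nat
  assumes vsp: "vector_space scale"
    and winj: "inj_on w {1..N}" and wind: "module.independent scale (w ` {1..N})"
    and wspan: "module.span scale (w ` {1..N}) = UNIV"
begin

lemma basis_coeffs_zero:
  assumes "(\<Sum>m\<in>{1..N}. scale (f m) (w m)) = 0" "m \<in> {1..N}"
  shows "f m = 0"
proof -
  interpret V: vector_space scale by (rule vsp)
  let ?u = "\<lambda>v. f (the_inv_into {1..N} w v)"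
  have "(\<Sum>v\<in>w ` {1..N}. scale (?u v) v) = (\<Sum>m\<in>{1..N}. scale (?u (w m)) (w m))"
    using sum.reindex[OF winj, of "\<lambda>v. scale (?u v) v"] by simp
  also have "\<dots> = (\<Sum>m\<in>{1..N}. scale (f m) (w m))"
    using the_inv_into_f_f[OF winj] by (intro sum.cong) simp_all
  finally have "?u (w m) = 0"
    using V.independentD[OF wind, of "w ` {1..N}" ?u "w m"] assms by simp
  then show ?thesis using the_inv_into_f_f[OF winj assms(2)] by simp
qed

lemma bcoord_eq:
  assumes "\<forall>m. m \<notin> {1..N} \<longrightarrow> f m = 0" "x = (\<Sum>m\<in>{1..N}. scale (f m) (w m))"
  shows "bcoord scale w N x = f"
  unfolding bcoord_def
proof (rule the_equality)
  interpret V: vector_space scale by (rule vsp)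
  show "(\<forall>m. m \<notin> {1..N} \<longrightarrow> f m = 0) \<and> x = (\<Sum>m\<in>{1..N}. scale (f m) (w m))" using assms by blast
  fix g assume g: "(\<forall>m. m \<notin> {1..N} \<longrightarrow> g m = 0) \<and> x = (\<Sum>m\<in>{1..N}. scale (g m) (w m))"
  have diff: "(\<Sum>m\<in>{1..N}. scale (g m - f m) (w m)) = 0"
    using g assms(2) by (simp add: V.scale_left_diff_distrib sum_subtractf)
  have "g m - f m = 0" if "m \<in> {1..N}" for m by (rule basis_coeffs_zero[OF diff that])
  then show "g = f" using g assms(1) by (intro ext) (metis eq_iff_diff_eq_0)
qed

lemma basis_repr: "\<exists>g. x = (\<Sum>m\<in>{1..N}. scale (g m) (w m))"
  using span_image_repr[OF vsp, of "{1..N}" x w] wspan by simp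

end

text \<open>The family y_k = w_{D+k} - \<Sum>_{l \<le> D} h_kl w_l (k = 1..a) has the coordinate vectors
  of a unitriangular matrix.\<close>
definition tri_coeff :: "nat \<Rightarrow> (nat \<Rightarrow> nat \<Rightarrow> 'k::field) \<Rightarrow> nat \<Rightarrow> nat \<Rightarrow> 'k" where
  "tri_coeff D h k m = (if m = D + k then 1 else 0) - (if m \<in> {1..D} then h k m else 0)"

context
  fixes scale :: "'k::field \<Rightarrow> 'p::ab_group_add \<Rightarrow> 'p" and w y :: "nat \<Rightarrow> 'p"
    and h :: "nat \<Rightarrow> nat \<Rightarrow> 'k" and D a :: nat
  assumes vsp: "vector_space scale"
    and winj: "inj_on w {1..D+a}" and wind: "module.independent scale (w ` {1..D+a})"
    and wspan: "module.span scale (w ` {1..D+a}) = UNIV"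
    and ydef: "\<And>k. k \<in> {1..a} \<Longrightarrow> y k = w (D+k) - (\<Sum>l\<in>{1..D}. scale (h k l) (w l))"
begin

lemma tri_repr: "k \<in> {1..a} \<Longrightarrow> y k = (\<Sum>m\<in>{1..D+a}. scale (tri_coeff D h k m) (w m))"
proof -
  interpret V: vector_space scale by (rule vsp)
  assume k: "k \<in> {1..a}"
  have "(\<Sum>m\<in>{1..D+a}. scale (if m = D + k then 1 else 0) (w m)) = w (D + k)"
    using sum_indicator[OF vsp, of "{1..D+a}" "D+k" w] k by simp
  moreover have "(\<Sum>m\<in>{1..D+a}. scale (if m \<in> {1..D} then h k m else 0) (w m))
      = (\<Sum>l\<in>{1..D}. scale (h k l) (w l))"
    by (rule sum.mono_neutral_cong_right) auto
  ultimately show ?thesis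
    unfolding tri_coeff_def V.scale_left_diff_distrib sum_subtractf ydef[OF k] by simp
qed

lemma tri_coord: "k \<in> {1..a} \<Longrightarrow> bcoord scale w (D+a) (y k) = tri_coeff D h k"
  by (rule bcoord_eq[OF vsp winj wind wspan _ tri_repr]) (auto simp: tri_coeff_def)

lemma tri_coeff_diag: "k' \<in> {1..a} \<Longrightarrow> tri_coeff D h k (D + k') = (if k' = k then 1 else 0)"
  unfolding tri_coeff_def by auto

lemma tri_coeff_combination_diag:
  assumes k0: "k0 \<in> {1..a}"
  shows "(\<Sum>k\<in>{1..a}. lam k * tri_coeff D h k (D + k0)) = lam k0"
proof -
  have "(\<Sum>k\<in>{1..a}. lam k * tri_coeff D h k (D + k0)) = (\<Sum>k\<in>{1..a}. if k0 = k then lam k else 0)"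
    by (rule sum.cong[OF refl]) (simp add: tri_coeff_diag[OF k0])
  also have "\<dots> = lam k0" using k0 by simp
  finally show ?thesis .
qed

lemma tri_combination:
  "(\<Sum>k\<in>{1..a}. scale (lam k) (y k))
     = (\<Sum>m\<in>{1..D+a}. scale (\<Sum>k\<in>{1..a}. lam k * tri_coeff D h k m) (w m))"
proof -
  interpret V: vector_space scale by (rule vsp)
  have "(\<Sum>k\<in>{1..a}. scale (lam k) (y k))
      = (\<Sum>k\<in>{1..a}. \<Sum>m\<in>{1..D+a}. scale (lam k * tri_coeff D h k m) (w m))"
    by (rule sum.cong[OF refl]) (simp add: tri_repr V.scale_sum_right)
  also have "\<dots> = (\<Sum>m\<in>{1..D+a}. scale (\<Sum>k\<in>{1..a}. lam k * tri_coeff D h k m) (w m))"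
    by (rule scale_double_sum[OF vsp, symmetric]) simp_all
  finally show ?thesis .
qed

text \<open>The family is injective and linearly independent: its coordinates on w_{D+1..D+a}
  form the identity matrix.\<close>
lemma tri_independent: "inj_on y {1..a} \<and> module.independent scale (y ` {1..a})"
proof
  interpret V: vector_space scale by (rule vsp)
  show injy: "inj_on y {1..a}"
  proof (rule inj_onI)
    fix k1 k2 assume k: "k1 \<in> {1..a}" "k2 \<in> {1..a}" and "y k1 = y k2"
    then have "tri_coeff D h k1 (D + k1) = tri_coeff D h k2 (D + k1)" using tri_coord by metis
    then show "k1 = k2" using tri_coeff_diag[OF k(1)] by (auto split: if_splits)
  qed
  show "V.independent (y ` {1..a})"
  proof
    assume "V.dependent (y ` {1..a})"
    then obtain u where u: "\<exists>v\<in>y ` {1..a}. u v \<noteq> 0" "(\<Sum>v\<in>y ` {1..a}. scale (u v) v) = 0"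
      by (subst (asm) V.dependent_finite) blast+
    have "(\<Sum>k\<in>{1..a}. scale (u (y k)) (y k)) = 0"
      using u(2) sum.reindex[OF injy, of "\<lambda>v. scale (u v) v"] by simp
    then have s0: "(\<Sum>m\<in>{1..D+a}. scale (\<Sum>k\<in>{1..a}. u (y k) * tri_coeff D h k m) (w m)) = 0"
      by (simp only: tri_combination)
    have "u (y k0) = 0" if k0: "k0 \<in> {1..a}" for k0
      using basis_coeffs_zero[OF vsp winj wind wspan s0, of "D + k0"] k0
        tri_coeff_combination_diag[OF k0, of "\<lambda>k. u (y k)"] by simp
    then show False using u(1) by blast
  qed
qed

lemma tri_span:
  assumes subC: "module.subspace scale C" and yC: "\<And>k. k \<in> {1..a} \<Longrightarrow> y k \<in> C"
    and bmC: "\<forall>f. (\<Sum>l\<in>{1..D}. scale (f l) (w l)) \<in> C \<longrightarrow> (\<forall>l\<in>{1..D}. f l = 0)"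
  shows "module.span scale (y ` {1..a}) = C"
proof
  interpret V: vector_space scale by (rule vsp)
  show "V.span (y ` {1..a}) \<subseteq> C" by (rule V.span_minimal) (use yC subC in auto)
  show "C \<subseteq> V.span (y ` {1..a})"
  proof
    fix x assume xC: "x \<in> C"
    obtain g where g: "x = (\<Sum>m\<in>{1..D+a}. scale (g m) (w m))"
      using basis_repr[OF vsp winj wind wspan] by blast
    define z where "z = x - (\<Sum>k\<in>{1..a}. scale (g (D + k)) (y k))"
    have zC: "z \<in> C" unfolding z_def
      by (intro V.subspace_diff[OF subC xC] V.subspace_sum[OF subC] V.subspace_scale[OF subC] yC)
    define ee where "ee m = g m - (\<Sum>k\<in>{1..a}. g (D + k) * tri_coeff D h k m)" for m
    have "z = (\<Sum>m\<in>{1..D+a}. scale (ee m) (w m))"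
      unfolding z_def tri_combination g ee_def by (simp add: V.scale_left_diff_distrib sum_subtractf)
    also have "\<dots> = (\<Sum>m\<in>{1..D}. scale (ee m) (w m))"
    proof (rule sum.mono_neutral_right)
      show "\<forall>m\<in>{1..D+a} - {1..D}. scale (ee m) (w m) = 0"
      proof
        fix m assume "m \<in> {1..D+a} - {1..D}"
        then obtain k0 where "k0 \<in> {1..a}" "m = D + k0" by (intro that[of "m - D"]) auto
        then show "scale (ee m) (w m) = 0"
          unfolding ee_def using tri_coeff_combination_diag[of k0 "\<lambda>k. g (D + k)"] by simp
      qed
    qed auto
    finally have z: "z = (\<Sum>m\<in>{1..D}. scale (ee m) (w m))" .
    then have "ee m = 0" if "m \<in> {1..D}" for m using bmC zC that by simp
    then have "z = 0" unfolding z by simp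
    then have "x = (\<Sum>k\<in>{1..a}. scale (g (D + k)) (y k))" unfolding z_def by simp
    also have "\<dots> \<in> V.span (y ` {1..a})" by (intro V.span_sum V.span_scale V.span_base) simp
    finally show "x \<in> V.span (y ` {1..a})" .
  qed
qed

text \<open>The coefficient of y_1 \<and> ... \<and> y_a on w_{D+1} \<and> ... \<and> w_{D+a} is the determinant of
  an identity matrix.\<close>
lemma tri_wedge: "wedge scale w (D+a) a y {D+1..D+a} = 1"
proof -
  have "{D+1..D+a} = {D+1..<D+a+1}" by auto
  then have sl: "sorted_list_of_set {D+1..D+a} = [D+1..<D+a+1]" by simp
  have "mat a a (\<lambda>(k, j). bcoord scale w (D+a) (y (Suc k)) (sorted_list_of_set {D+1..D+a} ! j)) = 1\<^sub>m a"
  proof (rule eq_matI)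
    fix k j assume k: "k < dim_row (1\<^sub>m a :: 'k mat)" and j: "j < dim_col (1\<^sub>m a :: 'k mat)"
    have "sorted_list_of_set {D+1..D+a} ! j = D + Suc j"
      unfolding sl using j nth_upt[of "D+1" j "D+a+1"] by (simp del: upt_Suc)
    then show "mat a a (\<lambda>(k, j). bcoord scale w (D+a) (y (Suc k)) (sorted_list_of_set {D+1..D+a} ! j)) $$ (k, j)
        = 1\<^sub>m a $$ (k, j)"
      using k j tri_coord[of "Suc k"] tri_coeff_diag[of "Suc j" "Suc k"] by simp
  qed simp_all
  then show ?thesis unfolding wedge_def by simp
qed

end

context
  fixes s t :: "'e \<Rightarrow> 'v" and I :: "(('v,'e) path \<Rightarrow> 'k::field) set" and e :: "nat \<Rightarrow> 'v" and D :: nat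
    and scale :: "'k \<Rightarrow> 'p::ab_group_add \<Rightarrow> 'p" and \<pi> :: "(('v,'e) ppath \<Rightarrow> 'k) \<Rightarrow> 'p"
    and L :: nat and d :: "'v \<Rightarrow> nat" and \<sigma> :: "('v,'e) ppath set"
    and b b' b'' :: "nat \<Rightarrow> ('v,'e) ppath" and u v :: nat
  assumes P: "proj_model s t I e D scale \<pi>"
    and bij: "bij_betw b {1..D} \<sigma>"
    and B_basis: "inj_on (pi_path \<pi> \<circ> Bseq b D b' u b'') {1..D + u + v}
                  \<and> module.independent scale ((pi_path \<pi> \<circ> Bseq b D b' u b'') ` {1..D + u + v})
                  \<and> module.span scale ((pi_path \<pi> \<circ> Bseq b D b' u b'') ` {1..D + u + v}) = UNIV"
begin

text \<open>Identification of the Pluecker point: if C in GRASS(sigma) contains the C'_i and the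
  elements C''_k = b''_k - \<Sum>_l Q_kl b_l, these form a basis of C, unitriangular with respect to
  the basis B, so their wedge represents C and has coefficient 1 on b'_1 \<and> ... \<and> b''_v.\<close>
lemma pluecker_point:
  fixes c :: "nat \<times> nat \<Rightarrow> 'k" and Q :: "nat \<Rightarrow> nat \<Rightarrow> 'k"
  assumes C: "C \<in> GRASS s t e D L d scale \<pi> \<sigma>"
    and C': "\<And>i. i \<in> {1..u} \<Longrightarrow> pi_path \<pi> (b' i)
          - (\<Sum>j\<in>{j\<in>{1..D}. (i, j) \<in> N0 t \<sigma> b D b' u}. scale (c (i, j)) (pi_path \<pi> (b j))) \<in> C"
    and C'': "\<And>k. k \<in> {1..v} \<Longrightarrow> pi_path \<pi> (b'' k) - (\<Sum>l\<in>{1..D}. scale (Q k l) (pi_path \<pi> (b l))) \<in> C"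
  shows "let y = (\<lambda>k. if k \<le> u then
                        pi_path \<pi> (b' k)
                        - (\<Sum>j\<in>{j\<in>{1..D}. (k, j) \<in> N0 t \<sigma> b D b' u}. scale (c (k, j)) (pi_path \<pi> (b j)))
                      else
                        pi_path \<pi> (b'' (k - u))
                        - (\<Sum>l\<in>{1..D}. scale (Q (k - u) l) (pi_path \<pi> (b l))));
             w = pi_path \<pi> \<circ> Bseq b D b' u b'';
             N = D + u + v
         in pluecker_rep scale w N (u + v) C (wedge scale w N (u + v) y)
            \<and> wedge scale w N (u + v) y {D + 1..D + u + v} = 1"
proof -
  interpret V: vector_space scale by (rule P_vector_space[OF P])
  let ?N = "N0 t \<sigma> b D b' u"
  define w where "w = pi_path \<pi> \<circ> Bseq b D b' u b''"
  define y where "y = (\<lambda>k. if k \<le> u then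
                        pi_path \<pi> (b' k)
                        - (\<Sum>j\<in>{j\<in>{1..D}. (k, j) \<in> ?N}. scale (c (k, j)) (pi_path \<pi> (b j)))
                      else pi_path \<pi> (b'' (k - u)) - (\<Sum>l\<in>{1..D}. scale (Q (k - u) l) (pi_path \<pi> (b l))))"
  define h where "h k l = (if k \<le> u then (if (k, l) \<in> ?N then c (k, l) else 0) else Q (k - u) l)" for k l
  have N: "D + u + v = D + (u + v)" by simp
  have w: "inj_on w {1..D + (u + v)}" "V.independent (w ` {1..D + (u + v)})"
      "V.span (w ` {1..D + (u + v)}) = UNIV"
    using B_basis unfolding w_def N by auto
  have wl: "w l = pi_path \<pi> (b l)" if "l \<in> {1..D}" for l using that unfolding w_def Bseq_def by simp
  have ydef: "y k = w (D + k) - (\<Sum>l\<in>{1..D}. scale (h k l) (w l))" if k: "k \<in> {1..u + v}" for k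
  proof (cases "k \<le> u")
    case True
    have "(\<Sum>l\<in>{1..D}. scale (h k l) (w l))
        = (\<Sum>l\<in>{1..D}. if (k, l) \<in> ?N then scale (c (k, l)) (pi_path \<pi> (b l)) else 0)"
      by (rule sum.cong[OF refl]) (simp add: h_def True wl)
    also have "\<dots> = (\<Sum>j\<in>{j\<in>{1..D}. (k, j) \<in> ?N}. scale (c (k, j)) (pi_path \<pi> (b j)))"
      by (rule sum.inter_filter[symmetric]) simp
    finally show ?thesis unfolding y_def using True k by (simp add: w_def Bseq_def)
  next
    case False
    have "(\<Sum>l\<in>{1..D}. scale (h k l) (w l)) = (\<Sum>l\<in>{1..D}. scale (Q (k - u) l) (pi_path \<pi> (b l)))"
      by (rule sum.cong[OF refl]) (simp add: h_def False wl)
    moreover have "w (D + k) = pi_path \<pi> (b'' (k - u))" using False unfolding w_def Bseq_def by simp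
    ultimately show ?thesis unfolding y_def using False by simp
  qed
  have yC: "y k \<in> C" if k: "k \<in> {1..u + v}" for k
  proof (cases "k \<le> u")
    case True
    then show ?thesis using C' k unfolding y_def by simp
  next
    case False
    then have "k - u \<in> {1..v}" using k by auto
    then show ?thesis using C'' False unfolding y_def by simp
  qed
  have "\<forall>f. (\<Sum>l\<in>{1..D}. scale (f l) (w l)) \<in> C \<longrightarrow> (\<forall>l\<in>{1..D}. f l = 0)"
    using sigma_coeff_zero[OF P_vector_space[OF P] C bij] wl by simp
  note bmC = this
  note tri = tri_independent[where scale=scale and w=w and y=y and h=h and D=D and a="u + v", OF P_vector_space[OF P] w ydef]
    tri_span[where scale=scale and w=w and y=y and h=h and D=D and a="u + v", OF P_vector_space[OF P] w ydef GRASS_submod(1)[OF C] yC bmC]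
    tri_wedge[where scale=scale and w=w and y=y and h=h and D=D and a="u + v", OF P_vector_space[OF P] w ydef]
  have "pluecker_rep scale w (D + u + v) (u + v) C (wedge scale w (D + u + v) (u + v) y)"
    unfolding pluecker_rep_def N using tri by (intro exI[of _ y] exI[of _ 1]) auto
  then show ?thesis unfolding Let_def y_def[symmetric] w_def[symmetric] using tri(3) by (simp add: add.assoc)
qed

end

theorem lemma6p2:
  fixes s t :: "'e::finite \<Rightarrow> 'v::finite"
    and I :: "(('v,'e) path \<Rightarrow> 'k::alg_closed_field) set"
    and L :: nat and d :: "'v \<Rightarrow> nat" and D :: nat and e :: "nat \<Rightarrow> 'v"
    and scale :: "'k \<Rightarrow> 'p::ab_group_add \<Rightarrow> 'p"
    and \<pi> :: "(('v,'e) ppath \<Rightarrow> 'k) \<Rightarrow> 'p"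
    and \<sigma> :: "('v,'e) ppath set"
    and b b' b'' :: "nat \<Rightarrow> ('v,'e) ppath" and u v :: nat
  assumes adm: "admissible_ideal s t I"
    and loewy: "loewy_length_is s t I (L + 1)"
    and dsum: "D = (\<Sum>i\<in>UNIV. d i)"
    and ecount: "\<forall>i. card {r \<in> {1..D}. e r = i} = d i"
    and P: "proj_model s t I e D scale \<pi>"
    and skel: "skeleton s t e D L \<sigma>"
    and nonempty: "GRASS s t e D L d scale \<pi> \<sigma> \<noteq> {}"
    and b_enum: "bij_betw b {1..D} \<sigma>"
    and b'_crit: "\<forall>i\<in>{1..u}. critical s t e D L \<sigma> (b' i)"
    and b'_indep: "\<forall>lam. (\<Sum>i\<in>{1..u}. scale (lam i) (pi_path \<pi> (b' i)))
                        \<in> module.span scale (pi_path \<pi> ` b ` {1..D}) \<longrightarrow> (\<forall>i\<in>{1..u}. lam i = 0)"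
    and b'_span: "\<forall>q. critical s t e D L \<sigma> q \<longrightarrow>
                   pi_path \<pi> q \<in> module.span scale (pi_path \<pi> ` (b' ` {1..u} \<union> b ` {1..D}))"
    and b''_paths: "\<forall>k\<in>{1..v}. b'' k \<in> ppaths s t e D"
    and B_basis: "inj_on (pi_path \<pi> \<circ> Bseq b D b' u b'') {1..D + u + v}
                  \<and> module.independent scale ((pi_path \<pi> \<circ> Bseq b D b' u b'') ` {1..D + u + v})
                  \<and> module.span scale ((pi_path \<pi> \<circ> Bseq b D b' u b'') ` {1..D + u + v}) = UNIV"
  shows "\<exists>q :: nat \<Rightarrow> nat \<Rightarrow> 'k mpoly.
     (\<forall>k\<in>{1..v}. \<forall>l\<in>{1..D}. mpoly_vars_in (q k l) (N0 t \<sigma> b D b' u)) \<and>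
     (\<forall>C \<in> GRASS s t e D L d scale \<pi> \<sigma>. \<forall>c :: nat \<times> nat \<Rightarrow> 'k.
        C = gen_submod s t e D scale \<pi>
              ((\<lambda>i. pi_path \<pi> (b' i)
                    - (\<Sum>j\<in>{j\<in>{1..D}. (i, j) \<in> N0 t \<sigma> b D b' u}. scale (c (i, j)) (pi_path \<pi> (b j))))
               ` {1..u}) \<longrightarrow>
        (let y = (\<lambda>k. if k \<le> u then
                        pi_path \<pi> (b' k)
                        - (\<Sum>j\<in>{j\<in>{1..D}. (k, j) \<in> N0 t \<sigma> b D b' u}. scale (c (k, j)) (pi_path \<pi> (b j)))
                      else
                        pi_path \<pi> (b'' (k - u))
                        - (\<Sum>l\<in>{1..D}. scale (mpoly_eval (q (k - u) l) c) (pi_path \<pi> (b l))));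
             w = pi_path \<pi> \<circ> Bseq b D b' u b'';
             N = D + u + v
         in pluecker_rep scale w N (u + v) C (wedge scale w N (u + v) y)
            \<and> wedge scale w N (u + v) y {D + 1..D + u + v} = 1))"
proof -
  have fins: "finite \<sigma>" using bij_betw_finite[OF b_enum] by simp
  have Bs: "finite ((pi_path \<pi> \<circ> Bseq b D b' u b'') ` {1..D + u + v})"
    "module.independent scale ((pi_path \<pi> \<circ> Bseq b D b' u b'') ` {1..D + u + v})"
    "module.span scale ((pi_path \<pi> \<circ> Bseq b D b' u b'') ` {1..D + u + v}) = UNIV"
    using B_basis by auto
  obtain q :: "nat \<Rightarrow> nat \<Rightarrow> 'k mpoly" where q: "\<forall>k\<in>{1..v}. \<forall>l. mpoly_vars_in (q k l) (N0 t \<sigma> b D b' u) \<and>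
     (\<forall>C c. C \<in> GRASS s t e D L d scale \<pi> \<sigma>
        \<and> (\<forall>i\<in>{1..u}. pi_path \<pi> (b' i)
              - (\<Sum>j\<in>{j\<in>{1..D}. (i, j) \<in> N0 t \<sigma> b D b' u}. scale (c (i, j)) (pi_path \<pi> (b j))) \<in> C)
      \<longrightarrow> pi_path \<pi> (b'' k) - (\<Sum>l\<in>{1..D}. scale (mpoly_eval (q k l) c) (pi_path \<pi> (b l))) \<in> C)"
    using polynomial_reductions[OF P b_enum b'_span adm loewy skel fins Bs b''_paths] by blast
  show ?thesis
  proof (intro exI[of _ q] conjI ballI allI impI, goal_cases)
    case (1 k l)
    then show ?case using q by blast
  next
    case (2 C c)
    have C': "pi_path \<pi> (b' i)
        - (\<Sum>j\<in>{j\<in>{1..D}. (i, j) \<in> N0 t \<sigma> b D b' u}. scale (c (i, j)) (pi_path \<pi> (b j))) \<in> C"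
      if "i \<in> {1..u}" for i
      using that 2(2) unfolding gen_submod_def by blast
    then have C'': "pi_path \<pi> (b'' k) - (\<Sum>l\<in>{1..D}. scale (mpoly_eval (q k l) c) (pi_path \<pi> (b l))) \<in> C"
      if "k \<in> {1..v}" for k
      using q that 2(1) by blast
    note pluecker_point[where Q = "\<lambda>k l. mpoly_eval (q k l) c", OF P b_enum B_basis 2(1) C' C'']
    then show ?case by simp
  qed
qed

end
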